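(* Let $\{X_s,\|\cdot\|_s\}_{s\in\mathbb N_0}$ be a sequence of Banach spaces satisfying (F1)–(F3), let $\{\Theta_s\}_{s\in\mathbb N_0}$ be a sequence of $CB$-spaces satisfying (F1)–(F3), and let $\{g_i\}_{i=1}^\infty\in (X_F^* )^{\mathbb N}$ be an $F$-Bessel sequence for $X_F$ with respect to $\Theta_F$. Then: (a) there exists $\{f_i\}_{i=1}^\infty\in(X_F)^{\mathbb N}$ which is a $DF$-Bessel sequence for $X_F^*$ with respect to $\Theta_F^*$ and satisfies $f=\sum_{i=1}^\infty g_i(f)f_i$ for all $f\in X_F$ (convergence in $X_F$) if and only if $\{g_i\}$ is an $F$-frame for $X_F$ with respect to $\Theta_F$; (b) if $\{f_i\}\in(X_F)^{\mathbb N}$ is a $DF$-Bessel sequence for $X_F^*$ with respect to $\Theta_F^*$ with $f=\sum_{i=1}^\infty g_i(f)f_i$ for all $f\in X_F$, then: if all $\Theta_s$ and $\Theta_s^*$ are $CB$-spaces, $\{f_i\}$ is a pre-$DF$-frame for $X_F^*$ with respect to $\Theta_F^*$; and if all $\Theta_s$ are reflexive $CB$-spaces, $\{f_i\}$ is a $DF$-frame for $X_F^*$ with respect to $\Theta_F^*$.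
   Context: Conditions (F1)–(F3) for a sequence $\{Y_s,|\cdot|_s\}_{s\in\mathbb N_0}$ of separable Banach spaces: (F1) $\{0\}\neq\bigcap_sY_s\subseteq\dots\subseteq Y_1\subseteq Y_0$; (F2) $|\cdot|_0\le|\cdot|_1\le\dots$; (F3) $Y_F:=\bigcap_sY_s$ dense in each $Y_s$. $X_F=\bigcap_sX_s$, $\Theta_F=\bigcap_s\Theta_s$. $BK$-space: Banach sequence space with continuous coordinate functionals; $CB$-space: $BK$-space in which the canonical vectors $e_i$ form a Schauder basis. For a $CB$-space $\Theta$, $\Theta^*$ is identified with the $BK$-space $\{\{g(e_i)\}_{i=1}^\infty:g\in\Theta^*\}$ normed by $|||\{g(e_i)\}|||:=\|g\|_{\Theta^*}$. For a Banach space $X$ and $BK$-space $\Theta$: $\{g_i\}\subset X^*$ is a $\Theta$-Bessel sequence if $\{g_i(f)\}\in\Theta$ and $|||\{g_i(f)\}|||\le B\|f\|$ for all $f\in X$; a $\Theta$-frame if moreover $A\|f\|\le|||\{g_i(f)\}|||$ with $A>0$; a Banach frame w.r.t. $\Theta$ if it is a $\Theta$-frame and there is a bounded $V:\Theta\to X$ with $V(\{g_i(f)\})=f$. (For $\{f_i\}\subset X\subseteq X^{**}$ these are applied to $X^*$ via $g\mapsto\{g(f_i)\}$.) $F$-Bessel sequence / pre-$F$-frame / $F$-frame: $\{g_i\}\in(X_F^* )^{\mathbb N}$ with $\{g_i(f)\}\in\Theta_F$ for $f\in X_F$ and for each $s$ a constant $B_s$ with $|||\{g_i(f)\}|||_s\le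 B_s\|f\|_s$ ($F$-Bessel); plus $A_s\|f\|_s\le|||\{g_i(f)\}|||_s$, $A_s>0$ (pre-$F$-frame); plus an $F$-bounded $V:\Theta_F\to X_F$ with $V(\{g_i(f)\})=f$ for $f\in X_F$ ($F$-frame), $F$-bounded meaning $\|Vc\|_s\le K_s|||c|||_s$ for every $s$. $\{f_i\}\in(X_F)^{\mathbb N}$ is a $DF$-Bessel sequence (resp. pre-$DF$-frame, resp. $DF$-frame) for $X_F^*$ w.r.t. $\Theta_F^*$ if for every $s$ it is a $\Theta_s^*$-Bessel sequence (resp. $\Theta_s^*$-frame, resp. Banach frame w.r.t. $\Theta_s^*$) for $X_s^*$. *)

theory Defs
  imports "HOL-Analysis.Analysis" "HOL-Library.Function_Algebras"
begin

instantiation "fun" :: (type, real_vector) real_vector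
begin
definition scaleR_fun :: "real \<Rightarrow> ('a \<Rightarrow> 'b) \<Rightarrow> 'a \<Rightarrow> 'b"
  where "scaleR_fun c f = (\<lambda>x. c *\<^sub>R f x)"
instance
  by standard (simp_all add: scaleR_fun_def fun_eq_iff scaleR_add_right scaleR_add_left)
end

definition lin_on :: "'a::real_vector set \<Rightarrow> ('a \<Rightarrow> 'b::real_vector) \<Rightarrow> bool" where
  "lin_on S T \<longleftrightarrow> (\<forall>x\<in>S. \<forall>y\<in>S. T (x + y) = T x + T y) \<and> (\<forall>c. \<forall>x\<in>S. T (c *\<^sub>R x) = c *\<^sub>R T x)"

definition normed_on :: "'a::real_vector set \<Rightarrow> ('a \<Rightarrow> real) \<Rightarrow> bool" where
  "normed_on S n \<longleftrightarrow> 0 \<in> S \<and> (\<forall>x\<in>S. \<forall>y\<in>S. x + y \<in> S) \<and> (\<forall>c. \<forall>x\<in>S. c *\<^sub>R x \<in> S)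
     \<and> (\<forall>x\<in>S. n x \<ge> 0 \<and> (n x = 0 \<longleftrightarrow> x = 0))
     \<and> (\<forall>c. \<forall>x\<in>S. n (c *\<^sub>R x) = \<bar>c\<bar> * n x)
     \<and> (\<forall>x\<in>S. \<forall>y\<in>S. n (x + y) \<le> n x + n y)"

definition complete_on :: "'a::real_vector set \<Rightarrow> ('a \<Rightarrow> real) \<Rightarrow> bool" where
  "complete_on S n \<longleftrightarrow> (\<forall>u. (\<forall>k. u k \<in> S) \<and> (\<forall>\<epsilon>>0. \<exists>N. \<forall>m\<ge>N. \<forall>k\<ge>N. n (u m - u k) < \<epsilon>)
        \<longrightarrow> (\<exists>x\<in>S. (\<lambda>k. n (u k - x)) \<longlonglongrightarrow> 0))"

definition banach_on :: "'a::real_vector set \<Rightarrow> ('a \<Rightarrow> real) \<Rightarrow> bool" where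
  "banach_on S n \<longleftrightarrow> normed_on S n \<and> complete_on S n"

definition separable_on :: "'a::real_vector set \<Rightarrow> ('a \<Rightarrow> real) \<Rightarrow> bool" where
  "separable_on S n \<longleftrightarrow> (\<exists>D. countable D \<and> D \<subseteq> S \<and> (\<forall>x\<in>S. \<forall>\<epsilon>>0. \<exists>d\<in>D. n (x - d) < \<epsilon>))"

text \<open>Dual space: bounded linear functionals on S, canonically represented as
  functions vanishing outside S.\<close>
definition dual_on :: "'a::real_vector set \<Rightarrow> ('a \<Rightarrow> real) \<Rightarrow> ('a \<Rightarrow> real) set" where
  "dual_on S n = {g. lin_on S g \<and> (\<exists>C. \<forall>x\<in>S. \<bar>g x\<bar> \<le> C * n x) \<and> (\<forall>x. x \<notin> S \<longrightarrow> g x = 0)}"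

definition opnorm :: "'a::real_vector set \<Rightarrow> ('a \<Rightarrow> real) \<Rightarrow> ('a \<Rightarrow> real) \<Rightarrow> real" where
  "opnorm S n g = Sup {\<bar>g x\<bar> | x. x \<in> S \<and> n x \<le> 1}"

definition reflexive_on :: "'a::real_vector set \<Rightarrow> ('a \<Rightarrow> real) \<Rightarrow> bool" where
  "reflexive_on S n \<longleftrightarrow> (\<forall>\<Phi>\<in>dual_on (dual_on S n) (opnorm S n). \<exists>x\<in>S. \<forall>g\<in>dual_on S n. \<Phi> g = g x)"

section \<open>Sequence spaces (indices start at 0)\<close>

definition unitvec :: "nat \<Rightarrow> nat \<Rightarrow> real" where
  "unitvec i = (\<lambda>j. if j = i then 1 else 0)"

definition bk_space :: "(nat \<Rightarrow> real) set \<Rightarrow> ((nat \<Rightarrow> real) \<Rightarrow> real) \<Rightarrow> bool" where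
  "bk_space T n \<longleftrightarrow> banach_on T n \<and> (\<forall>i. \<exists>K. \<forall>c\<in>T. \<bar>c i\<bar> \<le> K * n c)"

definition cb_space :: "(nat \<Rightarrow> real) set \<Rightarrow> ((nat \<Rightarrow> real) \<Rightarrow> real) \<Rightarrow> bool" where
  "cb_space T n \<longleftrightarrow> bk_space T n \<and> (\<forall>i. unitvec i \<in> T)
     \<and> (\<forall>c\<in>T. (\<lambda>k. n (c - (\<Sum>i<k. c i *\<^sub>R unitvec i))) \<longlonglongrightarrow> 0)"

text \<open>The dual of a CB-space identified with the sequence space of values on unit vectors.\<close>
definition seqdual :: "(nat \<Rightarrow> real) set \<Rightarrow> ((nat \<Rightarrow> real) \<Rightarrow> real) \<Rightarrow> (nat \<Rightarrow> real) set" where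
  "seqdual T n = {d. \<exists>g\<in>dual_on T n. \<forall>i. d i = g (unitvec i)}"

definition seqdual_norm :: "(nat \<Rightarrow> real) set \<Rightarrow> ((nat \<Rightarrow> real) \<Rightarrow> real) \<Rightarrow> (nat \<Rightarrow> real) \<Rightarrow> real" where
  "seqdual_norm T n d = opnorm T n (SOME g. g \<in> dual_on T n \<and> (\<forall>i. d i = g (unitvec i)))"

definition F_seq :: "(nat \<Rightarrow> 'a::real_vector set) \<Rightarrow> (nat \<Rightarrow> 'a \<Rightarrow> real) \<Rightarrow> bool" where
  "F_seq Y n \<longleftrightarrow> (\<forall>s. banach_on (Y s) (n s) \<and> separable_on (Y s) (n s))
     \<and> (\<Inter>s. Y s) \<noteq> {0} \<and> (\<forall>s. Y (Suc s) \<subseteq> Y s)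
     \<and> (\<forall>s. \<forall>x\<in>Y (Suc s). n s x \<le> n (Suc s) x)
     \<and> (\<forall>s. \<forall>x\<in>Y s. \<forall>\<epsilon>>0. \<exists>y\<in>(\<Inter>t. Y t). n s (x - y) < \<epsilon>)"

text \<open>phi maps an element x of the space to its coefficient sequence.\<close>
definition bessel_cond :: "'x::real_vector set \<Rightarrow> ('x \<Rightarrow> real) \<Rightarrow> (nat \<Rightarrow> real) set \<Rightarrow> ((nat \<Rightarrow> real) \<Rightarrow> real) \<Rightarrow> ('x \<Rightarrow> nat \<Rightarrow> real) \<Rightarrow> bool" where
  "bessel_cond X nX T nT phi \<longleftrightarrow> (\<exists>B. \<forall>x\<in>X. phi x \<in> T \<and> nT (phi x) \<le> B * nX x)"

definition frame_cond :: "'x::real_vector set \<Rightarrow> ('x \<Rightarrow> real) \<Rightarrow> (nat \<Rightarrow> real) set \<Rightarrow> ((nat \<Rightarrow> real) \<Rightarrow> real) \<Rightarrow> ('x \<Rightarrow> nat \<Rightarrow> real) \<Rightarrow> bool" where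
  "frame_cond X nX T nT phi \<longleftrightarrow> bessel_cond X nX T nT phi \<and> (\<exists>A>0. \<forall>x\<in>X. A * nX x \<le> nT (phi x))"

definition banach_frame_cond :: "'x::real_vector set \<Rightarrow> ('x \<Rightarrow> real) \<Rightarrow> (nat \<Rightarrow> real) set \<Rightarrow> ((nat \<Rightarrow> real) \<Rightarrow> real) \<Rightarrow> ('x \<Rightarrow> nat \<Rightarrow> real) \<Rightarrow> bool" where
  "banach_frame_cond X nX T nT phi \<longleftrightarrow> frame_cond X nX T nT phi
     \<and> (\<exists>V. lin_on T V \<and> (\<forall>c\<in>T. V c \<in> X) \<and> (\<exists>K. \<forall>c\<in>T. nX (V c) \<le> K * nT c)
            \<and> (\<forall>x\<in>X. V (phi x) = x))"

definition Fdual :: "(nat \<Rightarrow> 'a::real_vector set) \<Rightarrow> (nat \<Rightarrow> 'a \<Rightarrow> real) \<Rightarrow> ('a \<Rightarrow> real) set" where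
  "Fdual X ns = {g. lin_on (\<Inter>s. X s) g \<and> (\<exists>s C. \<forall>f\<in>(\<Inter>t. X t). \<bar>g f\<bar> \<le> C * ns s f)}"

definition F_bessel :: "(nat \<Rightarrow> 'a::real_vector set) \<Rightarrow> (nat \<Rightarrow> 'a \<Rightarrow> real) \<Rightarrow> (nat \<Rightarrow> (nat \<Rightarrow> real) set) \<Rightarrow> (nat \<Rightarrow> (nat \<Rightarrow> real) \<Rightarrow> real) \<Rightarrow> (nat \<Rightarrow> 'a \<Rightarrow> real) \<Rightarrow> bool" where
  "F_bessel X ns T tn g \<longleftrightarrow> (\<forall>i. g i \<in> Fdual X ns)
     \<and> (\<forall>f\<in>(\<Inter>s. X s). (\<lambda>i. g i f) \<in> (\<Inter>s. T s))
     \<and> (\<forall>s. \<exists>B. \<forall>f\<in>(\<Inter>t. X t). tn s (\<lambda>i. g i f) \<le> B * ns s f)"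

definition pre_F_frame :: "(nat \<Rightarrow> 'a::real_vector set) \<Rightarrow> (nat \<Rightarrow> 'a \<Rightarrow> real) \<Rightarrow> (nat \<Rightarrow> (nat \<Rightarrow> real) set) \<Rightarrow> (nat \<Rightarrow> (nat \<Rightarrow> real) \<Rightarrow> real) \<Rightarrow> (nat \<Rightarrow> 'a \<Rightarrow> real) \<Rightarrow> bool" where
  "pre_F_frame X ns T tn g \<longleftrightarrow> F_bessel X ns T tn g
     \<and> (\<forall>s. \<exists>A>0. \<forall>f\<in>(\<Inter>t. X t). A * ns s f \<le> tn s (\<lambda>i. g i f))"

definition F_frame :: "(nat \<Rightarrow> 'a::real_vector set) \<Rightarrow> (nat \<Rightarrow> 'a \<Rightarrow> real) \<Rightarrow> (nat \<Rightarrow> (nat \<Rightarrow> real) set) \<Rightarrow> (nat \<Rightarrow> (nat \<Rightarrow> real) \<Rightarrow> real) \<Rightarrow> (nat \<Rightarrow> 'a \<Rightarrow> real) \<Rightarrow> bool" where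
  "F_frame X ns T tn g \<longleftrightarrow> pre_F_frame X ns T tn g
     \<and> (\<exists>V. lin_on (\<Inter>s. T s) V \<and> (\<forall>c\<in>(\<Inter>s. T s). V c \<in> (\<Inter>s. X s))
            \<and> (\<forall>s. \<exists>K. \<forall>c\<in>(\<Inter>t. T t). ns s (V c) \<le> K * tn s c)
            \<and> (\<forall>f\<in>(\<Inter>s. X s). V (\<lambda>i. g i f) = f))"

definition DF_bessel :: "(nat \<Rightarrow> 'a::real_vector set) \<Rightarrow> (nat \<Rightarrow> 'a \<Rightarrow> real) \<Rightarrow> (nat \<Rightarrow> (nat \<Rightarrow> real) set) \<Rightarrow> (nat \<Rightarrow> (nat \<Rightarrow> real) \<Rightarrow> real) \<Rightarrow> (nat \<Rightarrow> 'a) \<Rightarrow> bool" where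
  "DF_bessel X ns T tn f \<longleftrightarrow> (\<forall>i. f i \<in> (\<Inter>s. X s))
     \<and> (\<forall>s. bessel_cond (dual_on (X s) (ns s)) (opnorm (X s) (ns s))
                        (seqdual (T s) (tn s)) (seqdual_norm (T s) (tn s)) (\<lambda>h i. h (f i)))"

definition pre_DF_frame :: "(nat \<Rightarrow> 'a::real_vector set) \<Rightarrow> (nat \<Rightarrow> 'a \<Rightarrow> real) \<Rightarrow> (nat \<Rightarrow> (nat \<Rightarrow> real) set) \<Rightarrow> (nat \<Rightarrow> (nat \<Rightarrow> real) \<Rightarrow> real) \<Rightarrow> (nat \<Rightarrow> 'a) \<Rightarrow> bool" where
  "pre_DF_frame X ns T tn f \<longleftrightarrow> (\<forall>i. f i \<in> (\<Inter>s. X s))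
     \<and> (\<forall>s. frame_cond (dual_on (X s) (ns s)) (opnorm (X s) (ns s))
                        (seqdual (T s) (tn s)) (seqdual_norm (T s) (tn s)) (\<lambda>h i. h (f i)))"

definition DF_frame :: "(nat \<Rightarrow> 'a::real_vector set) \<Rightarrow> (nat \<Rightarrow> 'a \<Rightarrow> real) \<Rightarrow> (nat \<Rightarrow> (nat \<Rightarrow> real) set) \<Rightarrow> (nat \<Rightarrow> (nat \<Rightarrow> real) \<Rightarrow> real) \<Rightarrow> (nat \<Rightarrow> 'a) \<Rightarrow> bool" where
  "DF_frame X ns T tn f \<longleftrightarrow> (\<forall>i. f i \<in> (\<Inter>s. X s))
     \<and> (\<forall>s. banach_frame_cond (dual_on (X s) (ns s)) (opnorm (X s) (ns s))
                        (seqdual (T s) (tn s)) (seqdual_norm (T s) (tn s)) (\<lambda>h i. h (f i)))"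

text \<open>f = sum_i g_i(f) f_i for all f in X_F, convergence in X_F (i.e. in every norm).\<close>
definition F_reconstructs :: "(nat \<Rightarrow> 'a::real_vector set) \<Rightarrow> (nat \<Rightarrow> 'a \<Rightarrow> real) \<Rightarrow> (nat \<Rightarrow> 'a \<Rightarrow> real) \<Rightarrow> (nat \<Rightarrow> 'a) \<Rightarrow> bool" where
  "F_reconstructs X ns g f \<longleftrightarrow>
     (\<forall>x\<in>(\<Inter>s. X s). \<forall>s. (\<lambda>n. ns s (x - (\<Sum>i<n. g i x *\<^sub>R f i))) \<longlonglongrightarrow> 0)"

end

theory Submission
  imports Defs
begin

text \<open>
  (a) If \<open>{f\<^sub>i}\<close> is a DF-Bessel sequence with \<open>f = \<Sum> g\<^sub>i(f) f\<^sub>i\<close>, testing a finite sum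
  \<open>\<Sum> c\<^sub>i f\<^sub>i\<close> against a norming functional (Hahn--Banach) bounds its \<open>s\<close>-norm by the
  \<open>\<Theta>\<^sub>s\<close>-norm of \<open>\<Sum> c\<^sub>i e\<^sub>i\<close>. Hence for \<open>c \<in> \<Theta>\<^sub>F\<close> the synthesis series \<open>\<Sum> c\<^sub>i f\<^sub>i\<close> is
  Cauchy in every \<open>X\<^sub>s\<close>, and by (F1)--(F2) it has a single limit in \<open>X\<^sub>F\<close>. The resulting
  synthesis operator is F-bounded and inverts the analysis operator, so \<open>{g\<^sub>i}\<close> is an F-frame.
  Conversely, the reconstruction operator \<open>V\<close> of an F-frame yields \<open>f\<^sub>i = V e\<^sub>i\<close>: for
  \<open>h \<in> X\<^sub>s\<^sup>*\<close> the functional \<open>h \<circ> V\<close> extends from the dense subspace \<open>\<Theta>\<^sub>F\<close> to \<open>\<Theta>\<^sub>s\<close> and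
  represents \<open>{h(f\<^sub>i)}\<close>, and applying \<open>V\<close> to the basis expansion of \<open>{g\<^sub>i(f)}\<close> gives the
  reconstruction formula.

  (b) For \<open>h \<in> X\<^sub>s\<^sup>*\<close> the reconstruction formula gives \<open>h(x) = G(g\<^sub>i(x))\<close> on \<open>X\<^sub>F\<close>, where
  \<open>G \<in> \<Theta>\<^sub>s\<^sup>*\<close> represents \<open>{h(f\<^sub>i)}\<close>. So \<open>d \<mapsto>\<close> (continuous extension of \<open>x \<mapsto> G\<^sub>d(g\<^sub>i(x))\<close>)
  is a bounded operator \<open>\<Theta>\<^sub>s\<^sup>* \<rightarrow> X\<^sub>s\<^sup>*\<close> sending \<open>{h(f\<^sub>i)}\<close> back to \<open>h\<close>; its bound is the
  lower frame bound.
\<close>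

section \<open>Sublinear functionals and the Hahn--Banach theorem\<close>

definition sublinear_on :: "'a::real_vector set \<Rightarrow> ('a \<Rightarrow> real) \<Rightarrow> bool" where
  "sublinear_on S r \<longleftrightarrow>
     (\<forall>a\<in>S. \<forall>b\<in>S. r (a + b) \<le> r a + r b) \<and> (\<forall>c\<ge>0. \<forall>a\<in>S. r (c *\<^sub>R a) = c * r a)"

lemma sublinear_on_add: "sublinear_on S r \<Longrightarrow> a \<in> S \<Longrightarrow> b \<in> S \<Longrightarrow> r (a + b) \<le> r a + r b"
  by (simp add: sublinear_on_def)

lemma sublinear_on_scale: "sublinear_on S r \<Longrightarrow> c \<ge> 0 \<Longrightarrow> a \<in> S \<Longrightarrow> r (c *\<^sub>R a) = c * r a"
  by (simp add: sublinear_on_def)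

lemma sublinear_on_0: "sublinear_on S r \<Longrightarrow> 0 \<in> S \<Longrightarrow> r 0 = 0"
  using sublinear_on_scale[of S r 0 0] by simp

lemma sublinear_on_neg_le:
  assumes S: "subspace S" and r: "sublinear_on S r" and z: "z \<in> S"
  shows "- r (- z) \<le> r z"
proof -
  have "r (z + - z) \<le> r z + r (- z)"
    using S z by (intro sublinear_on_add[OF r]) (auto intro: subspace_neg)
  then show ?thesis using sublinear_on_0[OF r subspace_0[OF S]] by simp
qed

lemma sublinear_on_cong:
  "sublinear_on S r \<Longrightarrow> subspace S \<Longrightarrow> (\<And>z. z \<in> S \<Longrightarrow> r' z = r z) \<Longrightarrow> sublinear_on S r'"
  unfolding sublinear_on_def by (simp add: subspace_add subspace_scale)

lemma sublinear_on_odd_imp_lin_on: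
  assumes S: "subspace S" and m: "sublinear_on S m" and odd: "\<And>x. x \<in> S \<Longrightarrow> m (- x) = - m x"
  shows "lin_on S m"
  unfolding lin_on_def
proof (intro conjI ballI allI)
  fix a b assume a: "a \<in> S" and b: "b \<in> S"
  have "m (- a + - b) \<le> m (- a) + m (- b)"
    using S a b by (intro sublinear_on_add[OF m]) (auto intro: subspace_neg)
  then have "- m (a + b) \<le> - m a - m b"
    using odd a b odd[OF subspace_add[OF S a b]] by (simp add: add.commute)
  then show "m (a + b) = m a + m b" using sublinear_on_add[OF m a b] by simp
next
  fix c :: real and a assume a: "a \<in> S"
  show "m (c *\<^sub>R a) = c *\<^sub>R m a"
  proof (cases "c \<ge> 0")
    case True then show ?thesis using sublinear_on_scale[OF m True a] by simp
  next
    case False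
    have "m (c *\<^sub>R a) = m ((- c) *\<^sub>R (- a))" by simp
    also have "\<dots> = (- c) * m (- a)"
      using False S a by (intro sublinear_on_scale[OF m]) (auto intro: subspace_neg)
    finally show ?thesis using odd[OF a] by simp
  qed
qed

text \<open>Shifting a sublinear functional \<open>r\<close> in the direction \<open>x\<close> produces a smaller sublinear
  functional with value at most \<open>- r x\<close> at \<open>- x\<close>; hence a minimal sublinear functional is odd, and
  therefore linear.\<close>

definition sublinear_shift :: "'a::real_vector set \<Rightarrow> ('a \<Rightarrow> real) \<Rightarrow> 'a \<Rightarrow> 'a \<Rightarrow> real" where
  "sublinear_shift S r x =
     (\<lambda>z. if z \<in> S then Inf {r (z + t *\<^sub>R x) - t * r x | t. t \<ge> 0} else 0)"

lemma sublinear_shift_le: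
  assumes S: "subspace S" and r: "sublinear_on S r" and x: "x \<in> S" and z: "z \<in> S" and t: "t \<ge> 0"
  shows "sublinear_shift S r x z \<le> r (z + t *\<^sub>R x) - t * r x"
proof -
  have "- r (- z) \<le> r (z + t *\<^sub>R x) - t * r x" if "t \<ge> 0" for t
  proof -
    have "r ((z + t *\<^sub>R x) + - z) \<le> r (z + t *\<^sub>R x) + r (- z)"
      using S x z by (intro sublinear_on_add[OF r]) (auto intro: subspace_add subspace_scale subspace_neg)
    then show ?thesis using sublinear_on_scale[OF r that x] by simp
  qed
  then have "bdd_below {r (z + t *\<^sub>R x) - t * r x | t. t \<ge> 0}"
    unfolding bdd_below_def by blast
  then show ?thesis unfolding sublinear_shift_def using z t by (auto intro!: cInf_lower)
qed

lemma sublinear_shift_greatest: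
  assumes "z \<in> S" and "\<And>t. t \<ge> 0 \<Longrightarrow> v \<le> r (z + t *\<^sub>R x) - t * r x"
  shows "v \<le> sublinear_shift S r x z"
  unfolding sublinear_shift_def using assms by (auto intro!: cInf_greatest)

lemma sublinear_shift_le_self:
  "subspace S \<Longrightarrow> sublinear_on S r \<Longrightarrow> x \<in> S \<Longrightarrow> z \<in> S \<Longrightarrow> sublinear_shift S r x z \<le> r z"
  using sublinear_shift_le[of S r x z 0] by simp

lemma sublinear_shift_neg:
  assumes S: "subspace S" and r: "sublinear_on S r" and x: "x \<in> S"
  shows "sublinear_shift S r x (- x) \<le> - r x"
  using sublinear_shift_le[OF S r x subspace_neg[OF S x], of 1] sublinear_on_0[OF r subspace_0[OF S]]
  by simp

lemma sublinear_shift_add: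
  assumes S: "subspace S" and r: "sublinear_on S r" and x: "x \<in> S" and a: "a \<in> S" and b: "b \<in> S"
  shows "sublinear_shift S r x (a + b) \<le> sublinear_shift S r x a + sublinear_shift S r x b"
proof -
  let ?f = "sublinear_shift S r x"
  have key: "?f (a + b) \<le> (r (a + t1 *\<^sub>R x) - t1 * r x) + (r (b + t2 *\<^sub>R x) - t2 * r x)"
    if t1: "t1 \<ge> 0" and t2: "t2 \<ge> 0" for t1 t2
  proof -
    have "?f (a + b) \<le> r (a + b + (t1 + t2) *\<^sub>R x) - (t1 + t2) * r x"
      using sublinear_shift_le[OF S r x subspace_add[OF S a b]] t1 t2 by simp
    also have "a + b + (t1 + t2) *\<^sub>R x = (a + t1 *\<^sub>R x) + (b + t2 *\<^sub>R x)"
      by (simp add: algebra_simps)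
    also have "r \<dots> \<le> r (a + t1 *\<^sub>R x) + r (b + t2 *\<^sub>R x)"
      using S a b x by (intro sublinear_on_add[OF r]) (auto intro: subspace_add subspace_scale)
    finally show ?thesis by (simp add: algebra_simps)
  qed
  have "?f (a + b) - ?f b \<le> ?f a"
  proof (rule sublinear_shift_greatest[OF a])
    fix t1 :: real assume t1: "t1 \<ge> 0"
    have "?f (a + b) - (r (a + t1 *\<^sub>R x) - t1 * r x) \<le> ?f b"
      by (rule sublinear_shift_greatest[OF b]) (use key t1 in fastforce)
    then show "?f (a + b) - ?f b \<le> r (a + t1 *\<^sub>R x) - t1 * r x" by simp
  qed
  then show ?thesis by simp
qed

lemma sublinear_shift_scale:
  assumes S: "subspace S" and r: "sublinear_on S r" and x: "x \<in> S" and c: "c > 0" and a: "a \<in> S"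
  shows "sublinear_shift S r x (c *\<^sub>R a) = c * sublinear_shift S r x a"
proof -
  let ?f = "sublinear_shift S r x"
  have ca: "c *\<^sub>R a \<in> S" using S a by (rule subspace_scale)
  have r_scale: "r (c *\<^sub>R (a + t *\<^sub>R x)) = c * r (a + t *\<^sub>R x)" for t
    using S a x c by (intro sublinear_on_scale[OF r]) (auto intro: subspace_add subspace_scale)
  have "?f (c *\<^sub>R a) / c \<le> ?f a"
  proof (rule sublinear_shift_greatest[OF a])
    fix t :: real assume t: "t \<ge> 0"
    have "?f (c *\<^sub>R a) \<le> r (c *\<^sub>R a + (c * t) *\<^sub>R x) - (c * t) * r x"
      using sublinear_shift_le[OF S r x ca] c t by simp
    also have "\<dots> = c * (r (a + t *\<^sub>R x) - t * r x)"
      unfolding scaleR_right_distrib[symmetric] scaleR_scaleR[symmetric] r_scale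
      by (simp add: algebra_simps)
    finally show "?f (c *\<^sub>R a) / c \<le> r (a + t *\<^sub>R x) - t * r x"
      using c by (simp add: field_simps)
  qed
  moreover have "c * ?f a \<le> ?f (c *\<^sub>R a)"
  proof (rule sublinear_shift_greatest[OF ca])
    fix t :: real assume t: "t \<ge> 0"
    have "?f a \<le> r (a + (t / c) *\<^sub>R x) - (t / c) * r x"
      using sublinear_shift_le[OF S r x a, of "t / c"] c t by simp
    then have "c * ?f a \<le> c * (r (a + (t / c) *\<^sub>R x) - (t / c) * r x)"
      using c by simp
    also have "\<dots> = r (c *\<^sub>R (a + (t / c) *\<^sub>R x)) - t * r x"
      unfolding r_scale using c by (simp add: algebra_simps)
    also have "c *\<^sub>R (a + (t / c) *\<^sub>R x) = c *\<^sub>R a + t *\<^sub>R x" using c by (simp add: algebra_simps)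
    finally show "c * ?f a \<le> r (c *\<^sub>R a + t *\<^sub>R x) - t * r x" .
  qed
  ultimately show ?thesis using c by (simp add: field_simps)
qed

lemma sublinear_on_sublinear_shift:
  assumes S: "subspace S" and r: "sublinear_on S r" and x: "x \<in> S"
  shows "sublinear_on S (sublinear_shift S r x)"
proof -
  have "sublinear_shift S r x 0 = 0"
  proof (rule antisym)
    show "sublinear_shift S r x 0 \<le> 0"
      using sublinear_shift_le_self[OF S r x subspace_0[OF S]] sublinear_on_0[OF r subspace_0[OF S]]
      by simp
    show "0 \<le> sublinear_shift S r x 0"
      by (rule sublinear_shift_greatest[OF subspace_0[OF S]]) (use sublinear_on_scale[OF r _ x] in simp)
  qed
  then have "sublinear_shift S r x (c *\<^sub>R a) = c * sublinear_shift S r x a" if "c \<ge> 0" "a \<in> S" for c a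
    using sublinear_shift_scale[OF S r x _ that(2)] that(1) by (cases "c = 0") simp_all
  then show ?thesis
    unfolding sublinear_on_def using sublinear_shift_add[OF S r x] by blast
qed

definition pointwise_Inf :: "'a set \<Rightarrow> ('a \<Rightarrow> real) set \<Rightarrow> 'a \<Rightarrow> real" where
  "pointwise_Inf S C = (\<lambda>z. if z \<in> S then Inf ((\<lambda>r. r z) ` C) else 0)"

lemma pointwise_Inf_le:
  "z \<in> S \<Longrightarrow> r \<in> C \<Longrightarrow> bdd_below ((\<lambda>r. r z) ` C) \<Longrightarrow> pointwise_Inf S C z \<le> r z"
  unfolding pointwise_Inf_def by (auto intro!: cInf_lower)

lemma pointwise_Inf_greatest:
  "z \<in> S \<Longrightarrow> C \<noteq> {} \<Longrightarrow> (\<And>r. r \<in> C \<Longrightarrow> v \<le> r z) \<Longrightarrow> v \<le> pointwise_Inf S C z"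
  unfolding pointwise_Inf_def by (auto intro!: cInf_greatest)

lemma bdd_below_dominated_sublinear:
  assumes S: "subspace S" and z: "z \<in> S" and sub: "\<And>r. r \<in> C \<Longrightarrow> sublinear_on S r"
    and le_q: "\<And>r. r \<in> C \<Longrightarrow> \<forall>z\<in>S. r z \<le> q z"
  shows "bdd_below ((\<lambda>r. r z) ` C)"
proof -
  have "- q (- z) \<le> r z" if "r \<in> C" for r
    using sublinear_on_neg_le[OF S sub[OF that] z] le_q[OF that] subspace_neg[OF S z] by force
  then show ?thesis unfolding bdd_below_def by blast
qed

context
  fixes S :: "'a::real_vector set" and C :: "('a \<Rightarrow> real) set"
  assumes S: "subspace S" and C: "C \<noteq> {}" and sub: "\<And>r. r \<in> C \<Longrightarrow> sublinear_on S r"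
    and bdd: "\<And>z. z \<in> S \<Longrightarrow> bdd_below ((\<lambda>r. r z) ` C)"
begin

lemma pointwise_Inf_add:
  assumes chain: "\<And>a b. a \<in> C \<Longrightarrow> b \<in> C \<Longrightarrow> (\<forall>z\<in>S. b z \<le> a z) \<or> (\<forall>z\<in>S. a z \<le> b z)"
    and a: "a \<in> S" and b: "b \<in> S"
  shows "pointwise_Inf S C (a + b) \<le> pointwise_Inf S C a + pointwise_Inf S C b"
proof -
  let ?u = "pointwise_Inf S C"
  have ab: "a + b \<in> S" using subspace_add[OF S a b] .
  have key: "?u (a + b) \<le> r1 a + r2 b" if r1: "r1 \<in> C" and r2: "r2 \<in> C" for r1 r2
  proof -
    \<comment> \<open>use whichever of \<open>r1\<close>, \<open>r2\<close> is the smaller one\<close>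
    obtain r where r: "r \<in> C" "r a \<le> r1 a" "r b \<le> r2 b"
      using chain[OF r1 r2] r1 r2 a b by blast
    have "?u (a + b) \<le> r (a + b)" using pointwise_Inf_le[OF ab r(1) bdd[OF ab]] .
    also have "\<dots> \<le> r a + r b" using sublinear_on_add[OF sub[OF r(1)] a b] .
    finally show ?thesis using r by simp
  qed
  have "?u (a + b) - ?u b \<le> ?u a"
  proof (rule pointwise_Inf_greatest[OF a C])
    fix r1 assume r1: "r1 \<in> C"
    have "?u (a + b) - r1 a \<le> ?u b" by (rule pointwise_Inf_greatest[OF b C]) (use key r1 in fastforce)
    then show "?u (a + b) - ?u b \<le> r1 a" by simp
  qed
  then show ?thesis by simp
qed

lemma pointwise_Inf_scale:
  assumes c: "c \<ge> 0" and a: "a \<in> S"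
  shows "pointwise_Inf S C (c *\<^sub>R a) = c * pointwise_Inf S C a"
proof -
  let ?u = "pointwise_Inf S C"
  have ca: "c *\<^sub>R a \<in> S" using S a by (rule subspace_scale)
  have scale: "r (c *\<^sub>R a) = c * r a" if "r \<in> C" for r
    using sublinear_on_scale[OF sub[OF that] c a] .
  show ?thesis
  proof (cases "c = 0")
    case True
    obtain r where r: "r \<in> C" using C by blast
    have "?u 0 \<le> 0"
      using pointwise_Inf_le[OF subspace_0[OF S] r bdd[OF subspace_0[OF S]]]
        sublinear_on_0[OF sub[OF r] subspace_0[OF S]] by simp
    moreover have "0 \<le> ?u 0"
      by (rule pointwise_Inf_greatest[OF subspace_0[OF S] C]) (use sub sublinear_on_0 subspace_0[OF S] in force)
    ultimately show ?thesis using True by simp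
  next
    case False
    then have cp: "c > 0" using c by simp
    have "?u (c *\<^sub>R a) / c \<le> ?u a"
      by (rule pointwise_Inf_greatest[OF a C])
        (use pointwise_Inf_le[OF ca _ bdd[OF ca]] scale cp in \<open>force simp: field_simps\<close>)
    moreover have "c * ?u a \<le> ?u (c *\<^sub>R a)"
      by (rule pointwise_Inf_greatest[OF ca C])
        (use pointwise_Inf_le[OF a _ bdd[OF a]] scale cp in \<open>force simp: field_simps\<close>)
    ultimately show ?thesis using cp by (simp add: field_simps)
  qed
qed

lemma sublinear_on_pointwise_Inf:
  assumes chain: "\<And>a b. a \<in> C \<Longrightarrow> b \<in> C \<Longrightarrow> (\<forall>z\<in>S. b z \<le> a z) \<or> (\<forall>z\<in>S. a z \<le> b z)"
  shows "sublinear_on S (pointwise_Inf S C)"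
  unfolding sublinear_on_def
proof (intro conjI ballI allI impI)
  show "pointwise_Inf S C (a + b) \<le> pointwise_Inf S C a + pointwise_Inf S C b"
    if "a \<in> S" "b \<in> S" for a b
    by (rule pointwise_Inf_add[OF chain]) (simp_all add: that)
  show "pointwise_Inf S C (c *\<^sub>R a) = c * pointwise_Inf S C a" if "c \<ge> 0" "a \<in> S" for c a
    using that by (rule pointwise_Inf_scale)
qed

end

lemma pointwise_Inf_chain:
  assumes S: "subspace S" and C: "C \<noteq> {}"
    and sub: "\<And>r. r \<in> C \<Longrightarrow> sublinear_on S r" and le_q: "\<And>r. r \<in> C \<Longrightarrow> \<forall>z\<in>S. r z \<le> q z"
    and chain: "\<And>a b. a \<in> C \<Longrightarrow> b \<in> C \<Longrightarrow> (\<forall>z\<in>S. b z \<le> a z) \<or> (\<forall>z\<in>S. a z \<le> b z)"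
  shows "sublinear_on S (pointwise_Inf S C)" and "\<forall>z\<in>S. pointwise_Inf S C z \<le> q z"
    and "\<And>r z. r \<in> C \<Longrightarrow> z \<in> S \<Longrightarrow> pointwise_Inf S C z \<le> r z"
proof -
  have bdd: "bdd_below ((\<lambda>r. r z) ` C)" if "z \<in> S" for z
    using bdd_below_dominated_sublinear[OF S that sub le_q] by simp
  show "sublinear_on S (pointwise_Inf S C)"
    by (rule sublinear_on_pointwise_Inf[OF S C sub bdd chain]) simp_all
  show le_r: "pointwise_Inf S C z \<le> r z" if "r \<in> C" "z \<in> S" for r z
    using pointwise_Inf_le[OF that(2,1) bdd[OF that(2)]] .
  obtain r0 where r0: "r0 \<in> C" using C by blast
  show "\<forall>z\<in>S. pointwise_Inf S C z \<le> q z"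
    using le_r[OF r0] le_q[OF r0] by force
qed

text \<open>Zorn's lemma, applied to the sublinear functionals below \<open>q\<close>; these are normalised to \<open>0\<close>
  outside \<open>S\<close>, so that the pointwise order on \<open>S\<close> is antisymmetric.\<close>

lemma sublinear_on_minimal_below:
  assumes S: "subspace S" and q: "sublinear_on S q"
  obtains m where "sublinear_on S m" and "\<forall>z\<in>S. m z \<le> q z"
    and "\<And>r. sublinear_on S r \<Longrightarrow> \<forall>z\<in>S. r z \<le> m z \<Longrightarrow> \<forall>z\<in>S. r z = m z"
proof -
  define A where "A = {r. sublinear_on S r \<and> (\<forall>z\<in>S. r z \<le> q z) \<and> (\<forall>z. z \<notin> S \<longrightarrow> r z = 0)}"
  define P where "P = (\<lambda>a b::'a \<Rightarrow> real. \<forall>z\<in>S. b z \<le> a z)"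
  have restrict_A: "(\<lambda>z. if z \<in> S then r z else 0) \<in> A" if "sublinear_on S r" "\<forall>z\<in>S. r z \<le> q z" for r
    unfolding A_def using that by (auto intro: sublinear_on_cong[OF _ S])
  have po: "partial_order_on A (relation_of P A)"
  proof (rule partial_order_on_relation_ofI)
    show "P a a" for a by (simp add: P_def)
    show "P a c" if "P a b" "P b c" for a b c using that unfolding P_def by (meson order_trans)
    show "a = b" if "a \<in> A" "b \<in> A" "P a b" "P b a" for a b
    proof
      fix z show "a z = b z" using that unfolding A_def P_def by (cases "z \<in> S") force+
    qed
  qed
  have "\<exists>m\<in>A. \<forall>a\<in>A. P m a \<longrightarrow> a = m"
  proof (rule predicate_Zorn[OF po])
    fix C assume C: "C \<in> Chains (relation_of P A)"
    then have CA: "C \<subseteq> A" unfolding Chains_def relation_of_def by blast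
    show "\<exists>u\<in>A. \<forall>a\<in>C. P a u"
    proof (cases "C = {}")
      case True then show ?thesis using restrict_A[OF q] by blast
    next
      case False
      have sub: "sublinear_on S r" and le_q: "\<forall>z\<in>S. r z \<le> q z" if "r \<in> C" for r
        using CA that unfolding A_def by blast+
      have chain: "(\<forall>z\<in>S. b z \<le> a z) \<or> (\<forall>z\<in>S. a z \<le> b z)" if "a \<in> C" "b \<in> C" for a b
        using C that unfolding Chains_def relation_of_def P_def by blast
      note u = pointwise_Inf_chain[OF S False, of q]
      have "pointwise_Inf S C \<in> A"
        using u(1,2) sub le_q chain unfolding A_def by (simp add: pointwise_Inf_def)
      moreover have "\<forall>a\<in>C. P a (pointwise_Inf S C)"
        using u(3) sub le_q chain unfolding P_def by blast
      ultimately show ?thesis by blast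
    qed
  qed
  then obtain m where mA: "m \<in> A" and minimal: "\<And>a. a \<in> A \<Longrightarrow> P m a \<Longrightarrow> a = m" by blast
  show ?thesis
  proof (rule that)
    show "sublinear_on S m" "\<forall>z\<in>S. m z \<le> q z" using mA unfolding A_def by blast+
    fix r assume r: "sublinear_on S r" "\<forall>z\<in>S. r z \<le> m z"
    have "\<forall>z\<in>S. r z \<le> q z" using r(2) mA unfolding A_def by force
    moreover have "P m (\<lambda>z. if z \<in> S then r z else 0)" using r(2) unfolding P_def by simp
    ultimately have eq: "(\<lambda>z. if z \<in> S then r z else 0) = m" using minimal restrict_A[OF r(1)] by blast
    show "\<forall>z\<in>S. r z = m z"
    proof
      fix z assume "z \<in> S"
      then show "r z = m z" using fun_cong[OF eq, of z] by simp
    qed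
  qed
qed

theorem Hahn_Banach_sublinear:
  assumes S: "subspace S" and q: "sublinear_on S q"
  obtains L where "lin_on S L" and "\<forall>z\<in>S. L z \<le> q z"
proof -
  obtain m where m: "sublinear_on S m" and m_le: "\<forall>z\<in>S. m z \<le> q z"
    and minimal: "\<And>r. sublinear_on S r \<Longrightarrow> \<forall>z\<in>S. r z \<le> m z \<Longrightarrow> \<forall>z\<in>S. r z = m z"
    using sublinear_on_minimal_below[OF S q] by blast
  have odd: "m (- x) = - m x" if x: "x \<in> S" for x
  proof -
    have "\<forall>z\<in>S. sublinear_shift S m x z = m z"
      using sublinear_on_sublinear_shift[OF S m x] sublinear_shift_le_self[OF S m x] by (intro minimal) auto
    then have "m (- x) \<le> - m x" using sublinear_shift_neg[OF S m x] subspace_neg[OF S x] by simp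
    then show ?thesis using sublinear_on_neg_le[OF S m x] by simp
  qed
  have "lin_on S m" using sublinear_on_odd_imp_lin_on[OF S m odd] by simp
  then show ?thesis using that m_le by blast
qed

lemma lin_on_add: "lin_on S L \<Longrightarrow> x \<in> S \<Longrightarrow> y \<in> S \<Longrightarrow> L (x + y) = L x + L y"
  by (simp add: lin_on_def)

lemma lin_on_scale: "lin_on S L \<Longrightarrow> x \<in> S \<Longrightarrow> L (c *\<^sub>R x) = c *\<^sub>R L x"
  by (simp add: lin_on_def)

lemma lin_on_0: "lin_on S L \<Longrightarrow> 0 \<in> S \<Longrightarrow> L 0 = 0"
  using lin_on_scale[of S L 0 0] by simp

lemma lin_on_neg: "lin_on S L \<Longrightarrow> x \<in> S \<Longrightarrow> L (- x) = - L x"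
  using lin_on_scale[of S L x "-1"] by simp

lemma lin_on_diff: "lin_on S L \<Longrightarrow> subspace S \<Longrightarrow> x \<in> S \<Longrightarrow> y \<in> S \<Longrightarrow> L (x - y) = L x - L y"
  using lin_on_add[of S L x "- y"] lin_on_neg[of S L y] subspace_neg[of S y] by simp

lemma lin_on_sum:
  assumes L: "lin_on S L" and S: "subspace S" and v: "\<And>i. i \<in> I \<Longrightarrow> v i \<in> S"
  shows "L (\<Sum>i\<in>I. c i *\<^sub>R v i) = (\<Sum>i\<in>I. c i *\<^sub>R L (v i))"
  using v
proof (induction I rule: infinite_finite_induct)
  case (insert j I)
  have "(\<Sum>i\<in>I. c i *\<^sub>R v i) \<in> S" using insert by (intro subspace_sum[OF S] subspace_scale[OF S]) auto
  then show ?case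
    using insert subspace_scale[OF S] by (simp add: lin_on_add[OF L] lin_on_scale[OF L])
qed (simp_all add: lin_on_0[OF L subspace_0[OF S]])

lemma lin_on_compose:
  "lin_on S L \<Longrightarrow> lin_on U h \<Longrightarrow> subspace S \<Longrightarrow> (\<And>x. x \<in> S \<Longrightarrow> L x \<in> U) \<Longrightarrow> lin_on S (h \<circ> L)"
  unfolding lin_on_def by (simp add: subspace_add subspace_scale)

lemma normed_on_subspace: "normed_on S n \<Longrightarrow> subspace S"
  by (simp add: normed_on_def subspace_def)

lemma normed_on_nonneg: "normed_on S n \<Longrightarrow> x \<in> S \<Longrightarrow> n x \<ge> 0"
  by (simp add: normed_on_def)

lemma normed_on_eq_0_iff: "normed_on S n \<Longrightarrow> x \<in> S \<Longrightarrow> n x = 0 \<longleftrightarrow> x = 0"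
  by (simp add: normed_on_def)

lemma normed_on_0: "normed_on S n \<Longrightarrow> n 0 = 0"
  by (simp add: normed_on_def)

lemma normed_on_scale: "normed_on S n \<Longrightarrow> x \<in> S \<Longrightarrow> n (c *\<^sub>R x) = \<bar>c\<bar> * n x"
  by (simp add: normed_on_def)

lemma normed_on_triangle: "normed_on S n \<Longrightarrow> x \<in> S \<Longrightarrow> y \<in> S \<Longrightarrow> n (x + y) \<le> n x + n y"
  by (simp add: normed_on_def)

lemma normed_on_minus: "normed_on S n \<Longrightarrow> x \<in> S \<Longrightarrow> n (- x) = n x"
  using normed_on_scale[of S n x "-1"] by simp

lemma normed_on_commute: "normed_on S n \<Longrightarrow> x \<in> S \<Longrightarrow> y \<in> S \<Longrightarrow> n (x - y) = n (y - x)"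
  using normed_on_minus[of S n "y - x"] subspace_diff[OF normed_on_subspace] by (metis minus_diff_eq)

lemma normed_on_triangle_diff:
  "normed_on S n \<Longrightarrow> x \<in> S \<Longrightarrow> y \<in> S \<Longrightarrow> z \<in> S \<Longrightarrow> n (x - z) \<le> n (x - y) + n (y - z)"
  using normed_on_triangle[of S n "x - y" "y - z"] subspace_diff[OF normed_on_subspace]
  by (metis diff_add_cancel add_diff_eq)

lemma normed_on_diff_le: "normed_on S n \<Longrightarrow> x \<in> S \<Longrightarrow> y \<in> S \<Longrightarrow> n x - n y \<le> n (x - y)"
  using normed_on_triangle[of S n "x - y" y] subspace_diff[OF normed_on_subspace] by fastforce

lemma normed_on_abs_diff: "normed_on S n \<Longrightarrow> x \<in> S \<Longrightarrow> y \<in> S \<Longrightarrow> \<bar>n x - n y\<bar> \<le> n (x - y)"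
  using normed_on_diff_le[of S n x y] normed_on_diff_le[of S n y x] normed_on_commute[of S n x y]
  by linarith

lemma Cauchy_bound_by_null:
  fixes d :: "nat \<Rightarrow> nat \<Rightarrow> real"
  assumes b: "b \<longlonglongrightarrow> 0" and d: "\<And>m k. d m k \<le> b m + b k"
  shows "\<forall>\<epsilon>>0. \<exists>M. \<forall>m\<ge>M. \<forall>k\<ge>M. d m k < \<epsilon>"
proof (intro allI impI)
  fix \<epsilon> :: real assume "\<epsilon> > 0"
  then obtain M where M: "\<And>k. k \<ge> M \<Longrightarrow> \<bar>b k\<bar> < \<epsilon> / 2"
    using b[unfolded LIMSEQ_iff, rule_format, of "\<epsilon> / 2"] by auto
  show "\<exists>M. \<forall>m\<ge>M. \<forall>k\<ge>M. d m k < \<epsilon>"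
  proof (intro exI[of _ M] allI impI)
    fix m k assume "m \<ge> M" "k \<ge> M"
    then show "d m k < \<epsilon>" using M[of m] M[of k] d[of m k] by linarith
  qed
qed

lemma normed_on_tendsto_norm:
  assumes N: "normed_on S n" and x: "x \<in> S" and a: "\<And>k. a k \<in> S"
    and l: "(\<lambda>k. n (a k - x)) \<longlonglongrightarrow> 0"
  shows "(\<lambda>k. n (a k)) \<longlonglongrightarrow> n x"
proof -
  have "(\<lambda>k. n (a k) - n x) \<longlonglongrightarrow> 0"
    by (rule Lim_null_comparison[OF _ l]) (use normed_on_abs_diff[OF N a x] in auto)
  then show ?thesis by (simp add: LIM_zero_iff)
qed

lemma normed_on_tendsto_diff:
  assumes N: "normed_on S n" and x: "x \<in> S" and a: "\<And>k. a k \<in> S" and b: "\<And>k. b k \<in> S"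
    and la: "(\<lambda>k. n (a k - x)) \<longlonglongrightarrow> 0" and lb: "(\<lambda>k. n (b k - x)) \<longlonglongrightarrow> 0"
  shows "(\<lambda>k. n (a k - b k)) \<longlonglongrightarrow> 0"
proof (rule Lim_null_comparison)
  show "(\<lambda>k. n (a k - x) + n (b k - x)) \<longlonglongrightarrow> 0" using tendsto_add[OF la lb] by simp
  show "\<forall>\<^sub>F k in sequentially. norm (n (a k - b k)) \<le> n (a k - x) + n (b k - x)"
    using normed_on_triangle_diff[OF N a x b] normed_on_commute[OF N x b]
      normed_on_nonneg[OF N subspace_diff[OF normed_on_subspace[OF N] a b]]
    by (intro always_eventually allI) simp
qed

lemma normed_on_limit_unique:
  assumes N: "normed_on S n" and y: "y \<in> S" and y': "y' \<in> S" and u: "\<And>k. u k \<in> S"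
    and l: "(\<lambda>k. n (u k - y)) \<longlonglongrightarrow> 0" and l': "(\<lambda>k. n (u k - y')) \<longlonglongrightarrow> 0"
  shows "y = y'"
proof -
  have yy': "y - y' \<in> S" using subspace_diff[OF normed_on_subspace[OF N] y y'] .
  have "n (y - y') \<le> n (u k - y) + n (u k - y')" for k
    using normed_on_triangle_diff[OF N y u y', of k] normed_on_commute[OF N y u, of k] by simp
  then have "n (y - y') \<le> 0"
    using tendsto_add[OF l l'] by (intro tendsto_le[OF _ _ tendsto_const always_eventually]) auto
  then show ?thesis using normed_on_nonneg[OF N yy'] normed_on_eq_0_iff[OF N yy'] by simp
qed

lemma normed_on_dense_seq:
  assumes N: "normed_on S n" and DS: "D \<subseteq> S" and x: "x \<in> S"
    and dense: "\<forall>\<epsilon>>0. \<exists>d\<in>D. n (x - d) < \<epsilon>"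
  obtains a where "\<And>k. a k \<in> D" and "(\<lambda>k. n (a k - x)) \<longlonglongrightarrow> 0"
proof -
  have "\<forall>k. \<exists>d\<in>D. n (x - d) < inverse (real (Suc k))" using dense by simp
  then obtain a where a: "\<And>k. a k \<in> D" "\<And>k. n (x - a k) < inverse (real (Suc k))"
    by metis
  have "(\<lambda>k. n (a k - x)) \<longlonglongrightarrow> 0"
  proof (rule Lim_null_comparison[OF _ LIMSEQ_inverse_real_of_nat], intro always_eventually allI)
    fix k
    have ak: "a k \<in> S" using a DS by blast
    show "norm (n (a k - x)) \<le> inverse (real (Suc k))"
      using a(2)[of k] normed_on_commute[OF N ak x]
        normed_on_nonneg[OF N subspace_diff[OF normed_on_subspace[OF N] ak x]] by simp
  qed
  then show ?thesis using a that by blast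
qed

lemma normed_on_tendsto_add:
  assumes N: "normed_on S n" and x: "x \<in> S" and y: "y \<in> S" and a: "\<And>k. a k \<in> S" and b: "\<And>k. b k \<in> S"
    and la: "(\<lambda>k. n (a k - x)) \<longlonglongrightarrow> 0" and lb: "(\<lambda>k. n (b k - y)) \<longlonglongrightarrow> 0"
  shows "(\<lambda>k. n ((a k + b k) - (x + y))) \<longlonglongrightarrow> 0"
proof (rule Lim_null_comparison[OF _ tendsto_add_zero[OF la lb]], intro always_eventually allI)
  fix k
  have S: "subspace S" using normed_on_subspace[OF N] .
  have eq: "a k + b k - (x + y) = (a k - x) + (b k - y)" by simp
  have "n ((a k + b k) - (x + y)) \<le> n (a k - x) + n (b k - y)"
    unfolding eq by (rule normed_on_triangle[OF N subspace_diff[OF S a x] subspace_diff[OF S b y]])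
  then show "norm (n ((a k + b k) - (x + y))) \<le> n (a k - x) + n (b k - y)"
    using normed_on_nonneg[OF N subspace_diff[OF S subspace_add[OF S a b] subspace_add[OF S x y]]]
    by simp
qed

lemma normed_on_tendsto_scale:
  assumes N: "normed_on S n" and x: "x \<in> S" and a: "\<And>k. a k \<in> S"
    and la: "(\<lambda>k. n (a k - x)) \<longlonglongrightarrow> 0"
  shows "(\<lambda>k. n (c *\<^sub>R a k - c *\<^sub>R x)) \<longlonglongrightarrow> 0"
proof -
  have "n (c *\<^sub>R a k - c *\<^sub>R x) = \<bar>c\<bar> * n (a k - x)" for k
    using normed_on_scale[OF N subspace_diff[OF normed_on_subspace[OF N] a x]]
    by (simp add: scaleR_diff_right)
  then show ?thesis using tendsto_mult_right_zero[OF la, of "\<bar>c\<bar>"] by simp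
qed

section \<open>Bounded linear functionals\<close>

lemma dual_onI:
  "lin_on S g \<Longrightarrow> (\<And>x. x \<in> S \<Longrightarrow> \<bar>g x\<bar> \<le> C * n x) \<Longrightarrow> (\<And>x. x \<notin> S \<Longrightarrow> g x = 0) \<Longrightarrow> g \<in> dual_on S n"
  by (auto simp: dual_on_def)

lemma dual_on_lin: "g \<in> dual_on S n \<Longrightarrow> lin_on S g"
  by (simp add: dual_on_def)

lemma dual_on_outside: "g \<in> dual_on S n \<Longrightarrow> x \<notin> S \<Longrightarrow> g x = 0"
  by (simp add: dual_on_def)

lemma ex_pos_mult_bound:
  fixes a b :: "'x \<Rightarrow> real"
  assumes "\<forall>x\<in>S. a x \<le> K * b x" and "\<And>x. x \<in> S \<Longrightarrow> b x \<ge> 0"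
  shows "\<exists>K'>0. \<forall>x\<in>S. a x \<le> K' * b x"
proof (intro exI[of _ "max K 0 + 1"] conjI ballI)
  fix x assume x: "x \<in> S"
  have "K * b x \<le> (max K 0 + 1) * b x" using assms(2)[OF x] by (intro mult_right_mono) auto
  then show "a x \<le> (max K 0 + 1) * b x" using assms(1) x by fastforce
qed simp

lemma dual_on_bound:
  assumes g: "g \<in> dual_on S n" and N: "normed_on S n"
  obtains C where "C > 0" and "\<And>x. x \<in> S \<Longrightarrow> \<bar>g x\<bar> \<le> C * n x"
proof -
  obtain C where "\<forall>x\<in>S. \<bar>g x\<bar> \<le> C * n x" using g by (auto simp: dual_on_def)
  from ex_pos_mult_bound[OF this normed_on_nonneg[OF N]] show ?thesis using that by blast
qed

lemma dual_on_tendsto: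
  assumes g: "g \<in> dual_on S n" and N: "normed_on S n" and x: "x \<in> S" and a: "\<And>k. a k \<in> S"
    and l: "(\<lambda>k. n (a k - x)) \<longlonglongrightarrow> 0"
  shows "(\<lambda>k. g (a k)) \<longlonglongrightarrow> g x"
proof -
  obtain C where C: "\<And>x. x \<in> S \<Longrightarrow> \<bar>g x\<bar> \<le> C * n x" using dual_on_bound[OF g N] by blast
  have "(\<lambda>k. g (a k) - g x) \<longlonglongrightarrow> 0"
  proof (rule Lim_null_comparison)
    show "(\<lambda>k. C * n (a k - x)) \<longlonglongrightarrow> 0" using tendsto_mult_right_zero[OF l] .
    show "\<forall>\<^sub>F k in sequentially. norm (g (a k) - g x) \<le> C * n (a k - x)"
    proof (intro always_eventually allI)
      fix k
      have "g (a k) - g x = g (a k - x)"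
        using lin_on_diff[OF dual_on_lin[OF g] normed_on_subspace[OF N] a x] by simp
      then show "norm (g (a k) - g x) \<le> C * n (a k - x)"
        using C[OF subspace_diff[OF normed_on_subspace[OF N] a x]] by simp
    qed
  qed
  then show ?thesis by (simp add: LIM_zero_iff)
qed

lemma dual_on_add: "g1 \<in> dual_on S n \<Longrightarrow> g2 \<in> dual_on S n \<Longrightarrow> g1 + g2 \<in> dual_on S n"
proof -
  assume g1: "g1 \<in> dual_on S n" and g2: "g2 \<in> dual_on S n"
  obtain C1 where C1: "\<forall>x\<in>S. \<bar>g1 x\<bar> \<le> C1 * n x" using g1 by (auto simp: dual_on_def)
  obtain C2 where C2: "\<forall>x\<in>S. \<bar>g2 x\<bar> \<le> C2 * n x" using g2 by (auto simp: dual_on_def)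
  show ?thesis
  proof (rule dual_onI[where C = "C1 + C2"])
    show "\<bar>(g1 + g2) x\<bar> \<le> (C1 + C2) * n x" if "x \<in> S" for x
    proof -
      have "\<bar>g1 x\<bar> \<le> C1 * n x" "\<bar>g2 x\<bar> \<le> C2 * n x" using C1 C2 that by auto
      then show ?thesis using abs_triangle_ineq[of "g1 x" "g2 x"] by (simp add: distrib_right)
    qed
    show "lin_on S (g1 + g2)"
      using dual_on_lin[OF g1] dual_on_lin[OF g2] by (simp add: lin_on_def algebra_simps)
  qed (simp add: dual_on_outside[OF g1] dual_on_outside[OF g2])
qed

lemma dual_on_scaleR: "g \<in> dual_on S n \<Longrightarrow> c *\<^sub>R g \<in> dual_on S n"
proof -
  assume g: "g \<in> dual_on S n"
  obtain C where C: "\<forall>x\<in>S. \<bar>g x\<bar> \<le> C * n x" using g by (auto simp: dual_on_def)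
  show ?thesis
  proof (rule dual_onI[where C = "\<bar>c\<bar> * C"])
    show "\<bar>(c *\<^sub>R g) x\<bar> \<le> (\<bar>c\<bar> * C) * n x" if "x \<in> S" for x
      using C that by (simp add: scaleR_fun_def abs_mult mult.assoc mult_left_mono)
    show "lin_on S (c *\<^sub>R g)"
      using dual_on_lin[OF g] by (simp add: lin_on_def scaleR_fun_def algebra_simps)
  qed (simp add: scaleR_fun_def dual_on_outside[OF g])
qed

lemma opnorm_bdd_above:
  assumes g: "g \<in> dual_on S n" and N: "normed_on S n"
  shows "bdd_above {\<bar>g x\<bar> | x. x \<in> S \<and> n x \<le> 1}"
proof -
  obtain C where C: "C > 0" "\<And>x. x \<in> S \<Longrightarrow> \<bar>g x\<bar> \<le> C * n x" using dual_on_bound[OF g N] by blast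
  have "\<bar>g x\<bar> \<le> C" if "x \<in> S" "n x \<le> 1" for x
  proof -
    have "C * n x \<le> C" using that C(1) normed_on_nonneg[OF N] by (simp add: mult_left_le)
    then show ?thesis using C(2)[OF that(1)] by linarith
  qed
  then show ?thesis unfolding bdd_above_def by blast
qed

lemma abs_le_opnorm:
  assumes g: "g \<in> dual_on S n" and N: "normed_on S n" and x: "x \<in> S"
  shows "\<bar>g x\<bar> \<le> opnorm S n g * n x"
proof (cases "n x = 0")
  case True
  then have "g x = 0"
    using normed_on_eq_0_iff[OF N x] lin_on_0[OF dual_on_lin[OF g]] subspace_0[OF normed_on_subspace[OF N]]
    by simp
  then show ?thesis using True by simp
next
  case False
  then have np: "n x > 0" using normed_on_nonneg[OF N x] by simp
  let ?y = "(1 / n x) *\<^sub>R x"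
  have "\<bar>g ?y\<bar> \<le> opnorm S n g" unfolding opnorm_def
    using opnorm_bdd_above[OF g N] subspace_scale[OF normed_on_subspace[OF N] x]
      normed_on_scale[OF N x] np
    by (intro cSup_upper) auto
  then have "\<bar>g x\<bar> / n x \<le> opnorm S n g" using lin_on_scale[OF dual_on_lin[OF g] x] np by simp
  then show ?thesis using np by (simp add: field_simps)
qed

lemma opnorm_nonneg:
  assumes g: "g \<in> dual_on S n" and N: "normed_on S n"
  shows "opnorm S n g \<ge> 0"
proof -
  have "\<bar>g 0\<bar> \<le> opnorm S n g" unfolding opnorm_def
    using opnorm_bdd_above[OF g N] subspace_0[OF normed_on_subspace[OF N]] normed_on_0[OF N]
    by (intro cSup_upper) auto
  then show ?thesis by simp
qed

lemma opnorm_le: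
  assumes N: "normed_on S n" and K: "K \<ge> 0" and b: "\<And>x. x \<in> S \<Longrightarrow> \<bar>g x\<bar> \<le> K * n x"
  shows "opnorm S n g \<le> K"
  unfolding opnorm_def
proof (rule cSup_least)
  show "{\<bar>g x\<bar> | x. x \<in> S \<and> n x \<le> 1} \<noteq> {}"
    using subspace_0[OF normed_on_subspace[OF N]] normed_on_0[OF N] by auto
  show "v \<le> K" if "v \<in> {\<bar>g x\<bar> | x. x \<in> S \<and> n x \<le> 1}" for v
    using that b K by (auto intro: order_trans mult_left_le)
qed

theorem dual_on_norming:
  assumes N: "normed_on S n" and y: "y \<in> S"
  obtains h where "h \<in> dual_on S n" and "opnorm S n h \<le> 1" and "h y = n y"
proof -
  have S: "subspace S" using normed_on_subspace[OF N] .
  have n: "sublinear_on S n" unfolding sublinear_on_def using N by (simp add: normed_on_def)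
  \<comment> \<open>domination by the shift of \<open>n\<close> in direction \<open>y\<close>, not just by \<open>n\<close>, forces \<open>L y \<ge> n y\<close>\<close>
  obtain L where L: "lin_on S L" "\<forall>z\<in>S. L z \<le> sublinear_shift S n y z"
    using Hahn_Banach_sublinear[OF S sublinear_on_sublinear_shift[OF S n y]] by blast
  have L_le: "L z \<le> n z" if "z \<in> S" for z
    using L(2) sublinear_shift_le_self[OF S n y that] that by force
  have "L (- y) \<le> - n y" using L(2) sublinear_shift_neg[OF S n y] subspace_neg[OF S y] by force
  then have Ly: "L y = n y" using lin_on_neg[OF L(1) y] L_le[OF y] by simp
  have abs_L: "\<bar>L z\<bar> \<le> n z" if z: "z \<in> S" for z
    using L_le[OF z] L_le[OF subspace_neg[OF S z]] lin_on_neg[OF L(1) z] normed_on_minus[OF N z] by simp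
  define h where "h = (\<lambda>z. if z \<in> S then L z else 0)"
  have "lin_on S h" using L(1) S unfolding lin_on_def h_def by (simp add: subspace_add subspace_scale)
  then have "h \<in> dual_on S n" by (rule dual_onI[of _ _ 1]) (simp_all add: h_def abs_L)
  moreover have "opnorm S n h \<le> 1" by (rule opnorm_le[OF N]) (simp_all add: h_def abs_L)
  ultimately show ?thesis using that Ly y unfolding h_def by auto
qed

locale dense_extension =
  fixes S :: "'a::real_vector set" and n :: "'a \<Rightarrow> real" and D :: "'a set"
    and \<phi> :: "'a \<Rightarrow> real" and K :: real
  assumes normed: "normed_on S n" and D_subset: "D \<subseteq> S" and subspace_D: "subspace D"
    and dense: "\<forall>x\<in>S. \<forall>\<epsilon>>0. \<exists>d\<in>D. n (x - d) < \<epsilon>"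
    and lin: "lin_on D \<phi>" and K_nonneg: "K \<ge> 0" and bound: "\<And>d. d \<in> D \<Longrightarrow> \<bar>\<phi> d\<bar> \<le> K * n d"
begin

definition approx :: "'a \<Rightarrow> (nat \<Rightarrow> 'a) \<Rightarrow> bool" where
  "approx x a \<longleftrightarrow> (\<forall>k. a k \<in> D) \<and> (\<lambda>k. n (a k - x)) \<longlonglongrightarrow> 0"

definition extension :: "'a \<Rightarrow> real" where
  "extension x = (if x \<in> S then lim (\<lambda>k. \<phi> ((SOME a. approx x a) k)) else 0)"

lemma approx_exists:
  assumes x: "x \<in> S"
  shows "\<exists>a. approx x a"
proof -
  obtain a where "\<And>k. a k \<in> D" "(\<lambda>k. n (a k - x)) \<longlonglongrightarrow> 0"
    using normed_on_dense_seq[OF normed D_subset x] dense x by blast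
  then show ?thesis unfolding approx_def by blast
qed

lemma approx_in_S: "approx x a \<Longrightarrow> a k \<in> S"
  using D_subset unfolding approx_def by blast

lemma approx_convergent:
  assumes x: "x \<in> S" and a: "approx x a"
  shows "convergent (\<lambda>k. \<phi> (a k))"
proof -
  have aD: "a k \<in> D" for k using a unfolding approx_def by blast
  have aS: "a k \<in> S" for k using approx_in_S[OF a] .
  have "dist (\<phi> (a m)) (\<phi> (a k)) \<le> K * n (a m - x) + K * n (a k - x)" for m k
  proof -
    have "dist (\<phi> (a m)) (\<phi> (a k)) \<le> K * n (a m - a k)"
      using bound[OF subspace_diff[OF subspace_D aD aD]] lin_on_diff[OF lin subspace_D aD aD]
      by (simp add: dist_real_def)
    also have "\<dots> \<le> K * (n (a m - x) + n (a k - x))"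
      using normed_on_triangle_diff[OF normed aS x aS, of m k] normed_on_commute[OF normed x aS, of k]
        K_nonneg
      by (intro mult_left_mono) simp_all
    finally show ?thesis by (simp add: distrib_left)
  qed
  moreover have "(\<lambda>k. n (a k - x)) \<longlonglongrightarrow> 0" using a unfolding approx_def by blast
  ultimately have "Cauchy (\<lambda>k. \<phi> (a k))"
    unfolding Cauchy_def by (rule Cauchy_bound_by_null[OF tendsto_mult_right_zero, rotated])
  then show ?thesis by (simp add: Cauchy_convergent_iff)
qed

lemma approx_diff_tendsto:
  assumes x: "x \<in> S" and a: "approx x a" and b: "approx x b"
  shows "(\<lambda>k. \<phi> (a k) - \<phi> (b k)) \<longlonglongrightarrow> 0"
proof (rule Lim_null_comparison, intro always_eventually allI)
  have aD: "a k \<in> D" and bD: "b k \<in> D" for k using a b unfolding approx_def by blast+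
  have la: "(\<lambda>k. n (a k - x)) \<longlonglongrightarrow> 0" and lb: "(\<lambda>k. n (b k - x)) \<longlonglongrightarrow> 0"
    using a b unfolding approx_def by blast+
  show "(\<lambda>k. K * n (a k - b k)) \<longlonglongrightarrow> 0"
    by (rule tendsto_mult_right_zero[OF normed_on_tendsto_diff[OF normed x approx_in_S[OF a] approx_in_S[OF b] la lb]])
  show "norm (\<phi> (a k) - \<phi> (b k)) \<le> K * n (a k - b k)" for k
    using lin_on_diff[OF lin subspace_D aD bD] bound[OF subspace_diff[OF subspace_D aD bD]] by simp
qed

lemma extension_tendsto:
  assumes x: "x \<in> S" and a: "approx x a"
  shows "(\<lambda>k. \<phi> (a k)) \<longlonglongrightarrow> extension x"
proof -
  define a0 where "a0 = (SOME a. approx x a)"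
  have a0: "approx x a0" unfolding a0_def using approx_exists[OF x] by (rule someI_ex)
  have "(\<lambda>k. \<phi> (a0 k)) \<longlonglongrightarrow> extension x"
    using x approx_convergent[OF x a0]
    by (simp add: extension_def a0_def[symmetric] convergent_LIMSEQ_iff)
  with approx_diff_tendsto[OF x a a0] show ?thesis using tendsto_add by fastforce
qed

lemma lin_on_extension: "lin_on S extension"
  unfolding lin_on_def
proof (intro conjI ballI allI)
  have S: "subspace S" using normed_on_subspace[OF normed] .
  fix x y assume x: "x \<in> S" and y: "y \<in> S"
  obtain a b where a: "approx x a" and b: "approx y b" using approx_exists x y by blast
  have "approx (x + y) (\<lambda>k. a k + b k)"
    using a b approx_in_S[OF a] approx_in_S[OF b] subspace_add[OF subspace_D]
    unfolding approx_def by (auto intro: normed_on_tendsto_add[OF normed x y])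
  then have "(\<lambda>k. \<phi> (a k + b k)) \<longlonglongrightarrow> extension (x + y)"
    by (rule extension_tendsto[OF subspace_add[OF S x y]])
  moreover have "\<phi> (a k + b k) = \<phi> (a k) + \<phi> (b k)" for k
    using a b lin_on_add[OF lin] unfolding approx_def by simp
  ultimately have "(\<lambda>k. \<phi> (a k) + \<phi> (b k)) \<longlonglongrightarrow> extension (x + y)" by simp
  then show "extension (x + y) = extension x + extension y"
    using tendsto_add[OF extension_tendsto[OF x a] extension_tendsto[OF y b]] LIMSEQ_unique by blast
next
  have S: "subspace S" using normed_on_subspace[OF normed] .
  fix c :: real and x assume x: "x \<in> S"
  obtain a where a: "approx x a" using approx_exists x by blast
  have "approx (c *\<^sub>R x) (\<lambda>k. c *\<^sub>R a k)"
    using a approx_in_S[OF a] subspace_scale[OF subspace_D]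
    unfolding approx_def by (auto intro: normed_on_tendsto_scale[OF normed x])
  then have "(\<lambda>k. \<phi> (c *\<^sub>R a k)) \<longlonglongrightarrow> extension (c *\<^sub>R x)"
    by (rule extension_tendsto[OF subspace_scale[OF S x]])
  moreover have "\<phi> (c *\<^sub>R a k) = c * \<phi> (a k)" for k
    using a lin_on_scale[OF lin] unfolding approx_def by simp
  ultimately have "(\<lambda>k. c * \<phi> (a k)) \<longlonglongrightarrow> extension (c *\<^sub>R x)" by simp
  then show "extension (c *\<^sub>R x) = c *\<^sub>R extension x"
    using tendsto_mult_left[OF extension_tendsto[OF x a], of c] LIMSEQ_unique by simp
qed

lemma abs_extension_le:
  assumes x: "x \<in> S"
  shows "\<bar>extension x\<bar> \<le> K * n x"
proof -
  obtain a where a: "approx x a" using approx_exists x by blast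
  have "(\<lambda>k. K * n (a k)) \<longlonglongrightarrow> K * n x"
    using a approx_in_S[OF a] unfolding approx_def
    by (intro tendsto_mult_left normed_on_tendsto_norm[OF normed x]) auto
  with tendsto_rabs[OF extension_tendsto[OF x a]] show ?thesis
    using bound a unfolding approx_def by (intro tendsto_le[OF _ _ _ always_eventually]) auto
qed

lemma extension_eq:
  assumes d: "d \<in> D"
  shows "extension d = \<phi> d"
proof -
  have "approx d (\<lambda>k. d)" using d normed_on_0[OF normed] unfolding approx_def by simp
  then show ?thesis
    using extension_tendsto[of d "\<lambda>k. d"] d D_subset LIMSEQ_unique tendsto_const by blast
qed

lemma extension_outside: "x \<notin> S \<Longrightarrow> extension x = 0"
  unfolding extension_def by simp

lemma extension_dual_on: "extension \<in> dual_on S n"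
  using lin_on_extension abs_extension_le extension_outside by (rule dual_onI)

end

theorem dual_on_extend_dense:
  assumes "normed_on S n" and "D \<subseteq> S" and "subspace D"
    and "\<forall>x\<in>S. \<forall>\<epsilon>>0. \<exists>d\<in>D. n (x - d) < \<epsilon>"
    and "lin_on D \<phi>" and "K \<ge> 0" and "\<And>d. d \<in> D \<Longrightarrow> \<bar>\<phi> d\<bar> \<le> K * n d"
  obtains \<psi> where "\<psi> \<in> dual_on S n" and "\<And>d. d \<in> D \<Longrightarrow> \<psi> d = \<phi> d"
    and "\<And>x. x \<in> S \<Longrightarrow> \<bar>\<psi> x\<bar> \<le> K * n x"
proof -
  interpret dense_extension S n D \<phi> K by unfold_locales (fact assms)+
  show ?thesis using that extension_dual_on extension_eq abs_extension_le by blast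
qed

lemma dual_on_eq_dense:
  assumes N: "normed_on S n" and DS: "D \<subseteq> S" and dense: "\<forall>x\<in>S. \<forall>\<epsilon>>0. \<exists>d\<in>D. n (x - d) < \<epsilon>"
    and g1: "g1 \<in> dual_on S n" and g2: "g2 \<in> dual_on S n" and eq: "\<And>d. d \<in> D \<Longrightarrow> g1 d = g2 d"
  shows "g1 = g2"
proof
  fix x show "g1 x = g2 x"
  proof (cases "x \<in> S")
    case False then show ?thesis using dual_on_outside[OF g1] dual_on_outside[OF g2] by simp
  next
    case x: True
    obtain a where a: "\<And>k. a k \<in> D" "(\<lambda>k. n (a k - x)) \<longlonglongrightarrow> 0"
      using normed_on_dense_seq[OF N DS x] dense x by blast
    have aS: "\<And>k. a k \<in> S" using a DS by blast
    show ?thesis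
      using dual_on_tendsto[OF g1 N x aS a(2)] dual_on_tendsto[OF g2 N x aS a(2)] eq a(1)
      by (simp add: LIMSEQ_unique)
  qed
qed

lemma dual_on_bound_dense:
  assumes N: "normed_on S n" and DS: "D \<subseteq> S" and dense: "\<forall>x\<in>S. \<forall>\<epsilon>>0. \<exists>d\<in>D. n (x - d) < \<epsilon>"
    and g: "g \<in> dual_on S n" and bnd: "\<And>d. d \<in> D \<Longrightarrow> \<bar>g d\<bar> \<le> M * n d" and x: "x \<in> S"
  shows "\<bar>g x\<bar> \<le> M * n x"
proof -
  obtain a where a: "\<And>k. a k \<in> D" "(\<lambda>k. n (a k - x)) \<longlonglongrightarrow> 0"
    using normed_on_dense_seq[OF N DS x] dense x by blast
  have aS: "\<And>k. a k \<in> S" using a DS by blast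
  have "(\<lambda>k. M * n (a k)) \<longlonglongrightarrow> M * n x"
    by (intro tendsto_mult_left normed_on_tendsto_norm[OF N x aS a(2)])
  with tendsto_rabs[OF dual_on_tendsto[OF g N x aS a(2)]] show ?thesis
    using bnd a(1) by (intro tendsto_le[OF _ _ _ always_eventually]) auto
qed

section \<open>CB-spaces and their duals\<close>

lemma cb_space_normed: "cb_space T n \<Longrightarrow> normed_on T n"
  by (simp add: cb_space_def bk_space_def banach_on_def)

lemma cb_space_unitvec: "cb_space T n \<Longrightarrow> unitvec i \<in> T"
  by (simp add: cb_space_def)

lemma cb_space_expansion:
  "cb_space T n \<Longrightarrow> c \<in> T \<Longrightarrow> (\<lambda>k. n (c - (\<Sum>i<k. c i *\<^sub>R unitvec i))) \<longlonglongrightarrow> 0"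
  by (simp add: cb_space_def)

lemma dual_on_cb_expansion:
  assumes cb: "cb_space T n" and G: "G \<in> dual_on T n" and c: "c \<in> T"
  shows "(\<lambda>k. \<Sum>i<k. c i * G (unitvec i)) \<longlonglongrightarrow> G c"
proof -
  have N: "normed_on T n" using cb_space_normed[OF cb] .
  have e: "\<And>i. unitvec i \<in> T" using cb_space_unitvec[OF cb] .
  have p: "(\<Sum>i<k. c i *\<^sub>R unitvec i) \<in> T" for k
    using e by (intro subspace_sum[OF normed_on_subspace[OF N]] subspace_scale[OF normed_on_subspace[OF N]])
  have "(\<lambda>k. n ((\<Sum>i<k. c i *\<^sub>R unitvec i) - c)) \<longlonglongrightarrow> 0"
    using cb_space_expansion[OF cb c] normed_on_commute[OF N c p] by simp
  from dual_on_tendsto[OF G N c, where a = "\<lambda>k. \<Sum>i<k. c i *\<^sub>R unitvec i", OF p this]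
  show ?thesis
    using lin_on_sum[OF dual_on_lin[OF G] normed_on_subspace[OF N], of "{..<_}" unitvec c] e by simp
qed

lemma dual_on_cb_eq:
  assumes cb: "cb_space T n" and G1: "G1 \<in> dual_on T n" and G2: "G2 \<in> dual_on T n"
    and eq: "\<And>i. G1 (unitvec i) = G2 (unitvec i)"
  shows "G1 = G2"
proof
  fix c show "G1 c = G2 c"
  proof (cases "c \<in> T")
    case False then show ?thesis using dual_on_outside[OF G1] dual_on_outside[OF G2] by simp
  next
    case True
    show ?thesis
      using dual_on_cb_expansion[OF cb G1 True] dual_on_cb_expansion[OF cb G2 True] eq LIMSEQ_unique
      by simp
  qed
qed

text \<open>The same choice as in \<open>seqdual_norm\<close>; for CB-spaces it is immaterial, by
  \<open>dual_on_cb_eq\<close>.\<close>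

definition seqdual_functional :: "(nat \<Rightarrow> real) set \<Rightarrow> ((nat \<Rightarrow> real) \<Rightarrow> real) \<Rightarrow> (nat \<Rightarrow> real) \<Rightarrow> (nat \<Rightarrow> real) \<Rightarrow> real" where
  "seqdual_functional T n d = (SOME g. g \<in> dual_on T n \<and> (\<forall>i. d i = g (unitvec i)))"

lemma seqdualI: "G \<in> dual_on T n \<Longrightarrow> (\<And>i. d i = G (unitvec i)) \<Longrightarrow> d \<in> seqdual T n"
  by (auto simp: seqdual_def)

lemma seqdual_functional:
  assumes "d \<in> seqdual T n"
  shows "seqdual_functional T n d \<in> dual_on T n" and "\<And>i. d i = seqdual_functional T n d (unitvec i)"
proof -
  have "\<exists>g. g \<in> dual_on T n \<and> (\<forall>i. d i = g (unitvec i))" using assms by (auto simp: seqdual_def)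
  then have "seqdual_functional T n d \<in> dual_on T n \<and> (\<forall>i. d i = seqdual_functional T n d (unitvec i))"
    unfolding seqdual_functional_def by (rule someI_ex)
  then show "seqdual_functional T n d \<in> dual_on T n" and "\<And>i. d i = seqdual_functional T n d (unitvec i)"
    by blast+
qed

lemma seqdual_norm_eq: "seqdual_norm T n d = opnorm T n (seqdual_functional T n d)"
  by (simp add: seqdual_norm_def seqdual_functional_def)

lemma seqdual_functional_eq:
  assumes cb: "cb_space T n" and G: "G \<in> dual_on T n" and d: "\<And>i. d i = G (unitvec i)"
  shows "seqdual_functional T n d = G"
proof -
  have sd: "d \<in> seqdual T n" using seqdualI[OF G d] .
  show ?thesis
    using seqdual_functional[OF sd] d by (intro dual_on_cb_eq[OF cb _ G]) auto
qed

lemma seqdual_add: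
  assumes cb: "cb_space T n" and d1: "d1 \<in> seqdual T n" and d2: "d2 \<in> seqdual T n"
  shows "d1 + d2 \<in> seqdual T n"
    and "seqdual_functional T n (d1 + d2) = seqdual_functional T n d1 + seqdual_functional T n d2"
proof -
  note G1 = seqdual_functional[OF d1] and G2 = seqdual_functional[OF d2]
  have G: "seqdual_functional T n d1 + seqdual_functional T n d2 \<in> dual_on T n"
    using dual_on_add[OF G1(1) G2(1)] .
  have "(d1 + d2) i = (seqdual_functional T n d1 + seqdual_functional T n d2) (unitvec i)" for i
    using G1(2)[of i] G2(2)[of i] by simp
  then show "d1 + d2 \<in> seqdual T n"
    and "seqdual_functional T n (d1 + d2) = seqdual_functional T n d1 + seqdual_functional T n d2"
    using seqdualI[OF G] seqdual_functional_eq[OF cb G] by blast+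
qed

lemma seqdual_scaleR:
  assumes cb: "cb_space T n" and d: "d \<in> seqdual T n"
  shows "c *\<^sub>R d \<in> seqdual T n"
    and "seqdual_functional T n (c *\<^sub>R d) = c *\<^sub>R seqdual_functional T n d"
proof -
  note G = seqdual_functional[OF d]
  have cG: "c *\<^sub>R seqdual_functional T n d \<in> dual_on T n" using dual_on_scaleR[OF G(1)] .
  have "(c *\<^sub>R d) i = (c *\<^sub>R seqdual_functional T n d) (unitvec i)" for i
    using G(2)[of i] by (simp add: scaleR_fun_def)
  then show "c *\<^sub>R d \<in> seqdual T n"
    and "seqdual_functional T n (c *\<^sub>R d) = c *\<^sub>R seqdual_functional T n d"
    using seqdualI[OF cG] seqdual_functional_eq[OF cb cG] by blast+
qed

section \<open>Sequences of spaces satisfying (F1)--(F3)\<close>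

locale F_sequence =
  fixes Y :: "nat \<Rightarrow> 'a::real_vector set" and n :: "nat \<Rightarrow> 'a \<Rightarrow> real"
  assumes F_seq: "F_seq Y n"
begin

abbreviation YF :: "'a set" where "YF \<equiv> \<Inter>s. Y s"

lemma normed: "normed_on (Y s) (n s)"
  using F_seq by (simp add: F_seq_def banach_on_def)

lemma complete: "complete_on (Y s) (n s)"
  using F_seq by (simp add: F_seq_def banach_on_def)

lemma subspace: "subspace (Y s)"
  using normed_on_subspace[OF normed] .

lemma YF_D: "x \<in> YF \<Longrightarrow> x \<in> Y s"
  by blast

lemma subspace_YF: "subspace YF"
  using subspace by (auto simp: subspace_def)

lemma dense: "\<forall>x\<in>Y s. \<forall>\<epsilon>>0. \<exists>d\<in>YF. n s (x - d) < \<epsilon>"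
  using F_seq by (simp add: F_seq_def)

lemma antimono: "s \<le> t \<Longrightarrow> Y t \<subseteq> Y s"
  by (induction t rule: dec_induct) (use F_seq in \<open>auto simp: F_seq_def\<close>)

lemma norm_mono: "s \<le> t \<Longrightarrow> x \<in> Y t \<Longrightarrow> n s x \<le> n t x"
proof (induction t rule: dec_induct)
  case (step t)
  then have "x \<in> Y t" using F_seq by (auto simp: F_seq_def)
  then show ?case using step F_seq by (force simp: F_seq_def)
qed simp

text \<open>A sequence in \<open>Y\<^sub>F\<close> that is Cauchy for every norm converges in \<open>Y\<^sub>F\<close>: the limits in the
  spaces \<open>Y\<^sub>s\<close> all coincide, because convergence for \<open>n (Suc s)\<close> implies convergence for \<open>n s\<close>.\<close>

lemma complete_YF:
  assumes u: "\<And>k. u k \<in> YF"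
    and Cauchy: "\<And>s \<epsilon>. \<epsilon> > 0 \<Longrightarrow> \<exists>M. \<forall>m\<ge>M. \<forall>k\<ge>M. n s (u m - u k) < \<epsilon>"
  obtains y where "y \<in> YF" and "\<And>s. (\<lambda>k. n s (u k - y)) \<longlonglongrightarrow> 0"
proof -
  have "\<exists>y\<in>Y s. (\<lambda>k. n s (u k - y)) \<longlonglongrightarrow> 0" for s
    using complete[of s] u Cauchy unfolding complete_on_def by blast
  then obtain l where l: "\<And>s. l s \<in> Y s" "\<And>s. (\<lambda>k. n s (u k - l s)) \<longlonglongrightarrow> 0" by metis
  have "l (Suc s) = l s" for s
  proof (rule normed_on_limit_unique[OF normed _ l(1) _ _ l(2)])
    have sub: "Y (Suc s) \<subseteq> Y s" using antimono[of s "Suc s"] by simp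
    then show "l (Suc s) \<in> Y s" "u k \<in> Y s" for k using l(1) u by blast+
    show "(\<lambda>k. n s (u k - l (Suc s))) \<longlonglongrightarrow> 0"
    proof (rule Lim_null_comparison[OF _ l(2)[of "Suc s"]], intro always_eventually allI)
      fix k
      have "u k - l (Suc s) \<in> Y (Suc s)" using u l(1) subspace_diff[OF subspace] by blast
      then show "norm (n s (u k - l (Suc s))) \<le> n (Suc s) (u k - l (Suc s))"
        using norm_mono[of s "Suc s"] normed_on_nonneg[OF normed, of _ s] sub by auto
    qed
  qed
  then have "l s = l 0" for s by (induction s) simp_all
  then show ?thesis using that[of "l 0"] l by (metis INT_I)
qed

end

section \<open>F-Bessel sequences and reconstruction formulas\<close>

locale F_bessel_setting = X: F_sequence X ns + T: F_sequence T tn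
  for X :: "nat \<Rightarrow> 'a::real_vector set" and ns :: "nat \<Rightarrow> 'a \<Rightarrow> real"
    and T :: "nat \<Rightarrow> (nat \<Rightarrow> real) set" and tn :: "nat \<Rightarrow> (nat \<Rightarrow> real) \<Rightarrow> real" +
  fixes g :: "nat \<Rightarrow> 'a \<Rightarrow> real"
  assumes cb: "\<And>s. cb_space (T s) (tn s)"
    and bessel: "F_bessel X ns T tn g"
begin

abbreviation XF :: "'a set" where "XF \<equiv> \<Inter>s. X s"
abbreviation TF :: "(nat \<Rightarrow> real) set" where "TF \<equiv> \<Inter>s. T s"

lemma unitvec_TF: "unitvec i \<in> TF"
  using cb_space_unitvec[OF cb] by blast

lemma expansion_TF: "(\<Sum>i\<in>I. c i *\<^sub>R unitvec i) \<in> TF"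
  using unitvec_TF by (intro subspace_sum[OF T.subspace_YF] subspace_scale[OF T.subspace_YF])

lemma expansion_tendsto: "c \<in> TF \<Longrightarrow> (\<lambda>k. tn s (c - (\<Sum>i<k. c i *\<^sub>R unitvec i))) \<longlonglongrightarrow> 0"
  using cb_space_expansion[OF cb] by blast

lemma analysis_TF: "x \<in> XF \<Longrightarrow> (\<lambda>i. g i x) \<in> TF"
  using bessel by (simp add: F_bessel_def)

lemma analysis_bound:
  obtains B where "B > 0" and "\<And>x. x \<in> XF \<Longrightarrow> tn s (\<lambda>i. g i x) \<le> B * ns s x"
proof -
  obtain B where "\<forall>x\<in>XF. tn s (\<lambda>i. g i x) \<le> B * ns s x" using bessel unfolding F_bessel_def by blast
  from ex_pos_mult_bound[OF this normed_on_nonneg[OF X.normed]] show ?thesis using that by blast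
qed

lemma lin_on_analysis_compose:
  assumes "lin_on (T s) G"
  shows "lin_on XF (\<lambda>x. G (\<lambda>i. g i x))"
proof -
  have "lin_on XF (g i)" for i using bessel by (simp add: F_bessel_def Fdual_def)
  then have "lin_on XF (\<lambda>x. (\<lambda>i. g i x))"
    by (simp add: lin_on_def fun_eq_iff scaleR_fun_def)
  then show ?thesis
    using lin_on_compose[of XF _ "T s" G] assms X.subspace_YF analysis_TF by (simp add: comp_def)
qed

definition dual_reconstruction :: "nat \<Rightarrow> (nat \<Rightarrow> real) \<Rightarrow> 'a \<Rightarrow> real" where
  "dual_reconstruction s d = (SOME \<psi>. \<psi> \<in> dual_on (X s) (ns s)
      \<and> (\<forall>x\<in>XF. \<psi> x = seqdual_functional (T s) (tn s) d (\<lambda>i. g i x)))"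

lemma analysis_functional_bound:
  assumes G: "G \<in> dual_on (T s) (tn s)" and x: "x \<in> XF"
    and B: "\<And>x. x \<in> XF \<Longrightarrow> tn s (\<lambda>i. g i x) \<le> B * ns s x"
  shows "\<bar>G (\<lambda>i. g i x)\<bar> \<le> (B * opnorm (T s) (tn s) G) * ns s x"
proof -
  have "\<bar>G (\<lambda>i. g i x)\<bar> \<le> opnorm (T s) (tn s) G * tn s (\<lambda>i. g i x)"
    using abs_le_opnorm[OF G T.normed] analysis_TF[OF x] by blast
  also have "\<dots> \<le> opnorm (T s) (tn s) G * (B * ns s x)"
    using B[OF x] opnorm_nonneg[OF G T.normed] by (rule mult_left_mono)
  finally show ?thesis by (simp add: ac_simps)
qed

lemma dual_reconstruction:
  assumes d: "d \<in> seqdual (T s) (tn s)"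
  shows "dual_reconstruction s d \<in> dual_on (X s) (ns s)"
    and "\<And>x. x \<in> XF \<Longrightarrow> dual_reconstruction s d x = seqdual_functional (T s) (tn s) d (\<lambda>i. g i x)"
proof -
  note G = seqdual_functional[OF d]
  obtain B where B: "B > 0" "\<And>x. x \<in> XF \<Longrightarrow> tn s (\<lambda>i. g i x) \<le> B * ns s x"
    using analysis_bound by blast
  have K: "0 \<le> B * opnorm (T s) (tn s) (seqdual_functional (T s) (tn s) d)"
    using B(1) opnorm_nonneg[OF G(1) T.normed] by simp
  have bnd: "\<bar>seqdual_functional (T s) (tn s) d (\<lambda>i. g i x)\<bar>
      \<le> (B * opnorm (T s) (tn s) (seqdual_functional (T s) (tn s) d)) * ns s x" if "x \<in> XF" for x
    using analysis_functional_bound[OF G(1) that B(2)] .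
  obtain \<psi> where "\<psi> \<in> dual_on (X s) (ns s)"
    and "\<And>x. x \<in> XF \<Longrightarrow> \<psi> x = seqdual_functional (T s) (tn s) d (\<lambda>i. g i x)"
    using dual_on_extend_dense[OF X.normed _ X.subspace_YF X.dense
        lin_on_analysis_compose[OF dual_on_lin[OF G(1)]] K bnd] by blast
  then have "\<exists>\<psi>. \<psi> \<in> dual_on (X s) (ns s) \<and> (\<forall>x\<in>XF. \<psi> x = seqdual_functional (T s) (tn s) d (\<lambda>i. g i x))"
    by blast
  from someI_ex[OF this, folded dual_reconstruction_def]
  show "dual_reconstruction s d \<in> dual_on (X s) (ns s)"
    and "\<And>x. x \<in> XF \<Longrightarrow> dual_reconstruction s d x = seqdual_functional (T s) (tn s) d (\<lambda>i. g i x)"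
    by blast+
qed

lemma dual_reconstruction_unique:
  assumes d: "d \<in> seqdual (T s) (tn s)" and \<psi>: "\<psi> \<in> dual_on (X s) (ns s)"
    and eq: "\<And>x. x \<in> XF \<Longrightarrow> \<psi> x = seqdual_functional (T s) (tn s) d (\<lambda>i. g i x)"
  shows "dual_reconstruction s d = \<psi>"
  using dual_reconstruction[OF d] eq
  by (intro dual_on_eq_dense[OF X.normed _ X.dense _ \<psi>]) auto

lemma opnorm_dual_reconstruction:
  assumes d: "d \<in> seqdual (T s) (tn s)"
    and B: "B \<ge> 0" "\<And>x. x \<in> XF \<Longrightarrow> tn s (\<lambda>i. g i x) \<le> B * ns s x"
  shows "opnorm (X s) (ns s) (dual_reconstruction s d) \<le> B * seqdual_norm (T s) (tn s) d"
proof -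
  note G = seqdual_functional[OF d]
  have "\<bar>dual_reconstruction s d x\<bar> \<le> (B * seqdual_norm (T s) (tn s) d) * ns s x" if "x \<in> XF" for x
    using analysis_functional_bound[OF G(1) that B(2)] dual_reconstruction(2)[OF d that]
    by (simp add: seqdual_norm_eq)
  then have "\<bar>dual_reconstruction s d x\<bar> \<le> (B * seqdual_norm (T s) (tn s) d) * ns s x" if "x \<in> X s" for x
    using dual_on_bound_dense[OF X.normed _ X.dense dual_reconstruction(1)[OF d] _ that] by blast
  then show ?thesis
    using B(1) opnorm_nonneg[OF G(1) T.normed] by (intro opnorm_le[OF X.normed]) (simp_all add: seqdual_norm_eq)
qed

lemma lin_on_dual_reconstruction: "lin_on (seqdual (T s) (tn s)) (dual_reconstruction s)"
  unfolding lin_on_def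
proof (intro conjI ballI allI)
  fix d1 d2 assume d1: "d1 \<in> seqdual (T s) (tn s)" and d2: "d2 \<in> seqdual (T s) (tn s)"
  show "dual_reconstruction s (d1 + d2) = dual_reconstruction s d1 + dual_reconstruction s d2"
    using dual_reconstruction[OF d1] dual_reconstruction[OF d2] seqdual_add[OF cb d1 d2]
    by (intro dual_reconstruction_unique dual_on_add) auto
next
  fix c :: real and d assume d: "d \<in> seqdual (T s) (tn s)"
  show "dual_reconstruction s (c *\<^sub>R d) = c *\<^sub>R dual_reconstruction s d"
    using dual_reconstruction[OF d] seqdual_scaleR[OF cb d]
    by (intro dual_reconstruction_unique dual_on_scaleR) (auto simp: scaleR_fun_def)
qed

context
  fixes V :: "(nat \<Rightarrow> real) \<Rightarrow> 'a" and K :: "nat \<Rightarrow> real"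
  assumes V_lin: "lin_on TF V" and V_XF: "\<And>c. c \<in> TF \<Longrightarrow> V c \<in> XF"
    and V_bound: "\<And>s c. c \<in> TF \<Longrightarrow> ns s (V c) \<le> K s * tn s c" and K: "\<And>s. K s \<ge> 0"
begin

lemma coeff_unitvec_image:
  assumes h: "h \<in> dual_on (X s) (ns s)"
  shows "(\<lambda>i. h (V (unitvec i))) \<in> seqdual (T s) (tn s)"
    and "seqdual_norm (T s) (tn s) (\<lambda>i. h (V (unitvec i))) \<le> K s * opnorm (X s) (ns s) h"
proof -
  have hV: "lin_on TF (h \<circ> V)"
    using V_XF by (intro lin_on_compose[OF V_lin dual_on_lin[OF h] T.subspace_YF]) blast
  have bound: "\<bar>(h \<circ> V) c\<bar> \<le> (opnorm (X s) (ns s) h * K s) * tn s c" if c: "c \<in> TF" for c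
  proof -
    have "\<bar>h (V c)\<bar> \<le> opnorm (X s) (ns s) h * ns s (V c)"
      using abs_le_opnorm[OF h X.normed] V_XF[OF c] by blast
    also have "\<dots> \<le> opnorm (X s) (ns s) h * (K s * tn s c)"
      using V_bound[OF c] opnorm_nonneg[OF h X.normed] by (rule mult_left_mono)
    finally show ?thesis by (simp add: mult.assoc)
  qed
  have K': "0 \<le> opnorm (X s) (ns s) h * K s" using opnorm_nonneg[OF h X.normed] K[of s] by simp
  obtain G where G: "G \<in> dual_on (T s) (tn s)" "\<And>c. c \<in> TF \<Longrightarrow> G c = (h \<circ> V) c"
    "\<And>c. c \<in> T s \<Longrightarrow> \<bar>G c\<bar> \<le> (opnorm (X s) (ns s) h * K s) * tn s c"
    using dual_on_extend_dense[OF T.normed INT_lower[OF UNIV_I] T.subspace_YF T.dense hV K' bound] by blast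
  have d: "h (V (unitvec i)) = G (unitvec i)" for i using G(2)[OF unitvec_TF] by simp
  show "(\<lambda>i. h (V (unitvec i))) \<in> seqdual (T s) (tn s)" using seqdualI[OF G(1) d] .
  have "seqdual_norm (T s) (tn s) (\<lambda>i. h (V (unitvec i))) = opnorm (T s) (tn s) G"
    using seqdual_functional_eq[OF cb G(1) d] by (simp add: seqdual_norm_eq)
  also have "\<dots> \<le> opnorm (X s) (ns s) h * K s"
    using G(3) K' by (intro opnorm_le[OF T.normed]) auto
  finally show "seqdual_norm (T s) (tn s) (\<lambda>i. h (V (unitvec i))) \<le> K s * opnorm (X s) (ns s) h"
    by (simp add: mult.commute)
qed

lemma DF_bessel_unitvec_image: "DF_bessel X ns T tn (\<lambda>i. V (unitvec i))"
  unfolding DF_bessel_def bessel_cond_def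
proof (intro conjI allI)
  show "V (unitvec i) \<in> XF" for i using V_XF[OF unitvec_TF] .
  fix s
  show "\<exists>B. \<forall>h\<in>dual_on (X s) (ns s). (\<lambda>i. h (V (unitvec i))) \<in> seqdual (T s) (tn s)
      \<and> seqdual_norm (T s) (tn s) (\<lambda>i. h (V (unitvec i))) \<le> B * opnorm (X s) (ns s) h"
  proof (intro exI[of _ "K s"] ballI conjI)
    fix h assume h: "h \<in> dual_on (X s) (ns s)"
    show "(\<lambda>i. h (V (unitvec i))) \<in> seqdual (T s) (tn s)" using coeff_unitvec_image(1)[OF h] .
    show "seqdual_norm (T s) (tn s) (\<lambda>i. h (V (unitvec i))) \<le> K s * opnorm (X s) (ns s) h"
      using coeff_unitvec_image(2)[OF h] .
  qed
qed

lemma F_reconstructs_unitvec_image: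
  assumes left_inverse: "\<And>x. x \<in> XF \<Longrightarrow> V (\<lambda>i. g i x) = x"
  shows "F_reconstructs X ns g (\<lambda>i. V (unitvec i))"
  unfolding F_reconstructs_def
proof (intro ballI allI)
  fix x s assume x: "x \<in> XF"
  let ?c = "\<lambda>i. g i x" and ?E = "\<lambda>k. \<Sum>i<k. g i x *\<^sub>R unitvec i"
  have cE: "?c - ?E k \<in> TF" for k using subspace_diff[OF T.subspace_YF analysis_TF[OF x] expansion_TF] .
  \<comment> \<open>the partial reconstruction error is the image under \<open>V\<close> of the tail of the basis expansion\<close>
  have error: "x - (\<Sum>i<k. g i x *\<^sub>R V (unitvec i)) = V (?c - ?E k)" for k
  proof -
    have "V (?c - ?E k) = V ?c - V (?E k)"
      using lin_on_diff[OF V_lin T.subspace_YF analysis_TF[OF x] expansion_TF] .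
    also have "V (?E k) = (\<Sum>i<k. g i x *\<^sub>R V (unitvec i))"
      using lin_on_sum[OF V_lin T.subspace_YF unitvec_TF] .
    finally show ?thesis using left_inverse[OF x] by metis
  qed
  show "(\<lambda>k. ns s (x - (\<Sum>i<k. g i x *\<^sub>R V (unitvec i)))) \<longlonglongrightarrow> 0"
  proof (intro Lim_null_comparison[OF _ tendsto_mult_right_zero[OF expansion_tendsto[OF analysis_TF[OF x]]]]
      always_eventually allI)
    fix k
    show "norm (ns s (x - (\<Sum>i<k. g i x *\<^sub>R V (unitvec i)))) \<le> K s * tn s (?c - ?E k)"
      using V_bound[OF cE] normed_on_nonneg[OF X.normed] V_XF[OF cE] error
      by simp
  qed
qed

end

lemma F_frame_imp_DF_bessel:
  assumes "F_frame X ns T tn g"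
  shows "\<exists>f. DF_bessel X ns T tn f \<and> F_reconstructs X ns g f"
proof -
  obtain V where V: "lin_on TF V" "\<forall>c\<in>TF. V c \<in> XF"
    and bound: "\<forall>s. \<exists>K. \<forall>c\<in>TF. ns s (V c) \<le> K * tn s c"
    and left_inverse: "\<forall>x\<in>XF. V (\<lambda>i. g i x) = x"
    using assms unfolding F_frame_def by (elim conjE exE)
  have "\<exists>K>0. \<forall>c\<in>TF. ns s (V c) \<le> K * tn s c" for s
  proof -
    obtain K where "\<forall>c\<in>TF. ns s (V c) \<le> K * tn s c" using bound by blast
    moreover have "\<And>c. c \<in> TF \<Longrightarrow> tn s c \<ge> 0" using normed_on_nonneg[OF T.normed] by blast
    ultimately show ?thesis by (rule ex_pos_mult_bound)
  qed
  then obtain K where K: "\<And>s. K s > 0" and K_bound: "\<And>s c. c \<in> TF \<Longrightarrow> ns s (V c) \<le> K s * tn s c"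
    by metis
  have K0: "\<And>s. K s \<ge> 0" using K less_imp_le by blast
  have V_XF: "\<And>c. c \<in> TF \<Longrightarrow> V c \<in> XF" using V(2) by blast
  have "DF_bessel X ns T tn (\<lambda>i. V (unitvec i))"
    by (rule DF_bessel_unitvec_image[OF V(1) V_XF K_bound K0])
  moreover have "F_reconstructs X ns g (\<lambda>i. V (unitvec i))"
    by (rule F_reconstructs_unitvec_image[OF V(1) V_XF K_bound K0 left_inverse[rule_format]])
  ultimately show ?thesis by blast
qed

end

locale F_bessel_pair = F_bessel_setting +
  fixes f :: "nat \<Rightarrow> 'a"
  assumes DF_bessel: "DF_bessel X ns T tn f"
    and reconstructs: "F_reconstructs X ns g f"
begin

lemma f_XF: "f i \<in> XF"
  using DF_bessel by (simp add: DF_bessel_def)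

lemma synthesis_sum_XF: "(\<Sum>i\<in>I. c i *\<^sub>R f i) \<in> XF"
  using f_XF by (intro subspace_sum[OF X.subspace_YF] subspace_scale[OF X.subspace_YF])

lemma coeff_bessel:
  "bessel_cond (dual_on (X s) (ns s)) (opnorm (X s) (ns s)) (seqdual (T s) (tn s))
     (seqdual_norm (T s) (tn s)) (\<lambda>h i. h (f i))"
  using DF_bessel by (simp add: DF_bessel_def)

lemma coeff_seqdual: "h \<in> dual_on (X s) (ns s) \<Longrightarrow> (\<lambda>i. h (f i)) \<in> seqdual (T s) (tn s)"
  using coeff_bessel unfolding bessel_cond_def by blast

lemma dual_synthesis:
  assumes h: "h \<in> dual_on (X s) (ns s)"
  shows "h (\<Sum>i\<in>I. c i *\<^sub>R f i)
    = seqdual_functional (T s) (tn s) (\<lambda>i. h (f i)) (\<Sum>i\<in>I. c i *\<^sub>R unitvec i)"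
proof -
  note G = seqdual_functional[OF coeff_seqdual[OF h]]
  have "h (\<Sum>i\<in>I. c i *\<^sub>R f i) = (\<Sum>i\<in>I. c i *\<^sub>R h (f i))"
    using f_XF by (intro lin_on_sum[OF dual_on_lin[OF h] X.subspace]) blast
  also have "\<dots> = (\<Sum>i\<in>I. c i *\<^sub>R seqdual_functional (T s) (tn s) (\<lambda>i. h (f i)) (unitvec i))"
    using G(2)[symmetric] by simp
  also have "\<dots> = seqdual_functional (T s) (tn s) (\<lambda>i. h (f i)) (\<Sum>i\<in>I. c i *\<^sub>R unitvec i)"
    using unitvec_TF by (intro lin_on_sum[OF dual_on_lin[OF G(1)] T.subspace, symmetric]) blast
  finally show ?thesis .
qed

text \<open>Testing the synthesis against a norming functional turns the Bessel bound of \<open>{f\<^sub>i}\<close> on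
  \<open>X\<^sub>s\<^sup>*\<close> into a bound of the synthesis operator.\<close>

lemma synthesis_sum_bound:
  obtains B where "B \<ge> 0"
    and "\<And>I c. ns s (\<Sum>i\<in>I. c i *\<^sub>R f i) \<le> B * tn s (\<Sum>i\<in>I. c i *\<^sub>R unitvec i)"
proof -
  obtain B where B: "\<forall>h\<in>dual_on (X s) (ns s).
      seqdual_norm (T s) (tn s) (\<lambda>i. h (f i)) \<le> B * opnorm (X s) (ns s) h"
    using coeff_bessel unfolding bessel_cond_def by blast
  have "ns s (\<Sum>i\<in>I. c i *\<^sub>R f i) \<le> max B 0 * tn s (\<Sum>i\<in>I. c i *\<^sub>R unitvec i)" for I c
  proof -
    let ?y = "\<Sum>i\<in>I. c i *\<^sub>R f i" and ?e = "\<Sum>i\<in>I. c i *\<^sub>R unitvec i"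
    have y: "?y \<in> X s" by (rule X.YF_D[OF synthesis_sum_XF])
    obtain h where h: "h \<in> dual_on (X s) (ns s)" "opnorm (X s) (ns s) h \<le> 1" "h ?y = ns s ?y"
      using dual_on_norming[OF X.normed y] by blast
    let ?G = "seqdual_functional (T s) (tn s) (\<lambda>i. h (f i))"
    have G: "?G \<in> dual_on (T s) (tn s)" using seqdual_functional(1)[OF coeff_seqdual[OF h(1)]] .
    have e: "?e \<in> T s" by (rule T.YF_D[OF expansion_TF])
    have "opnorm (T s) (tn s) ?G \<le> B * opnorm (X s) (ns s) h"
      using B h(1) by (simp add: seqdual_norm_eq)
    also have "\<dots> \<le> max B 0 * opnorm (X s) (ns s) h"
      using opnorm_nonneg[OF h(1) X.normed] by (intro mult_right_mono) auto
    also have "\<dots> \<le> max B 0"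
      using h(2) by (intro mult_left_le) auto
    finally have G_norm: "opnorm (T s) (tn s) ?G \<le> max B 0" .
    have "ns s ?y = ?G ?e" using h(3) dual_synthesis[OF h(1)] by simp
    also have "\<dots> \<le> opnorm (T s) (tn s) ?G * tn s ?e"
      using abs_le_opnorm[OF G T.normed e] by simp
    also have "\<dots> \<le> max B 0 * tn s ?e"
      using mult_right_mono[OF G_norm normed_on_nonneg[OF T.normed e]] .
    finally show ?thesis .
  qed
  then show ?thesis using that[of "max B 0"] by simp
qed

lemma synthesis_Cauchy:
  assumes c: "c \<in> TF"
  shows "\<forall>\<epsilon>>0. \<exists>M. \<forall>m\<ge>M. \<forall>k\<ge>M. ns s ((\<Sum>i<m. c i *\<^sub>R f i) - (\<Sum>i<k. c i *\<^sub>R f i)) < \<epsilon>"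
proof -
  obtain B where B: "B \<ge> 0"
    and bound: "\<And>I c. ns s (\<Sum>i\<in>I. c i *\<^sub>R f i) \<le> B * tn s (\<Sum>i\<in>I. c i *\<^sub>R unitvec i)"
    using synthesis_sum_bound by blast
  let ?P = "\<lambda>k. \<Sum>i<k. c i *\<^sub>R f i" and ?E = "\<lambda>k. \<Sum>i<k. c i *\<^sub>R unitvec i"
  have P: "?P k \<in> X s" for k
    by (rule X.YF_D[OF synthesis_sum_XF])
  have E: "?E k \<in> T s" for k by (rule T.YF_D[OF expansion_TF])
  have cs: "c \<in> T s" using c by blast
  have diff: "ns s (?P m - ?P k) \<le> B * tn s (?E m - ?E k)" if "k \<le> m" for m k
  proof -
    have "?P m - ?P k = (\<Sum>i\<in>{k..<m}. c i *\<^sub>R f i)" "?E m - ?E k = (\<Sum>i\<in>{k..<m}. c i *\<^sub>R unitvec i)"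
      using sum_diff_nat_ivl[OF le0 that] by (simp_all add: atLeast0LessThan)
    then show ?thesis using bound by simp
  qed
  have "ns s (?P m - ?P k) \<le> B * tn s (?E m - c) + B * tn s (?E k - c)" for m k
  proof -
    have "ns s (?P m - ?P k) \<le> B * tn s (?E m - ?E k)"
      using diff[of k m] diff[of m k] normed_on_commute[OF X.normed P P, of m k]
        normed_on_commute[OF T.normed E E, of m k] by (cases "k \<le> m") auto
    also have "\<dots> \<le> B * (tn s (?E m - c) + tn s (?E k - c))"
      using normed_on_triangle_diff[OF T.normed E cs E, of m k] normed_on_commute[OF T.normed cs E, of k] B
      by (intro mult_left_mono) simp_all
    finally show ?thesis by (simp add: distrib_left)
  qed
  moreover have "(\<lambda>k. B * tn s (?E k - c)) \<longlonglongrightarrow> 0"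
    using expansion_tendsto[OF c, of s] normed_on_commute[OF T.normed cs E] by (simp add: tendsto_mult_right_zero)
  ultimately show ?thesis by (intro Cauchy_bound_by_null)
qed

definition synthesis :: "(nat \<Rightarrow> real) \<Rightarrow> 'a" where
  "synthesis c = (SOME y. y \<in> XF \<and> (\<forall>s. (\<lambda>k. ns s ((\<Sum>i<k. c i *\<^sub>R f i) - y)) \<longlonglongrightarrow> 0))"

lemma synthesis:
  assumes c: "c \<in> TF"
  shows "synthesis c \<in> XF" and "(\<lambda>k. ns s ((\<Sum>i<k. c i *\<^sub>R f i) - synthesis c)) \<longlonglongrightarrow> 0"
proof -
  from X.complete_YF[OF synthesis_sum_XF synthesis_Cauchy[OF c, rule_format]]
  obtain y where "y \<in> XF" "\<And>s. (\<lambda>k. ns s ((\<Sum>i<k. c i *\<^sub>R f i) - y)) \<longlonglongrightarrow> 0"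
    by blast
  then have "\<exists>y. y \<in> XF \<and> (\<forall>s. (\<lambda>k. ns s ((\<Sum>i<k. c i *\<^sub>R f i) - y)) \<longlonglongrightarrow> 0)" by blast
  from someI_ex[OF this, folded synthesis_def]
  show "synthesis c \<in> XF" and "(\<lambda>k. ns s ((\<Sum>i<k. c i *\<^sub>R f i) - synthesis c)) \<longlonglongrightarrow> 0"
    by blast+
qed

lemma synthesis_eqI:
  assumes c: "c \<in> TF" and y: "y \<in> XF" and l: "(\<lambda>k. ns 0 ((\<Sum>i<k. c i *\<^sub>R f i) - y)) \<longlonglongrightarrow> 0"
  shows "synthesis c = y"
proof (rule normed_on_limit_unique[OF X.normed _ _ _ synthesis(2)[OF c] l])
  show "synthesis c \<in> X 0" "y \<in> X 0" using synthesis(1)[OF c] y by blast+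
  show "(\<Sum>i<k. c i *\<^sub>R f i) \<in> X 0" for k
    by (rule X.YF_D[OF synthesis_sum_XF])
qed

lemma lin_on_synthesis: "lin_on TF synthesis"
  unfolding lin_on_def
proof (intro conjI ballI allI)
  have P: "(\<Sum>i<k. c i *\<^sub>R f i) \<in> X 0" for c k
    by (rule X.YF_D[OF synthesis_sum_XF])
  have V: "synthesis c \<in> X 0" if "c \<in> TF" for c using synthesis(1)[OF that] by blast
  fix c1 c2 assume c1: "c1 \<in> TF" and c2: "c2 \<in> TF"
  have "(\<lambda>k. ns 0 (((\<Sum>i<k. c1 i *\<^sub>R f i) + (\<Sum>i<k. c2 i *\<^sub>R f i)) - (synthesis c1 + synthesis c2))) \<longlonglongrightarrow> 0"
    by (rule normed_on_tendsto_add[OF X.normed V[OF c1] V[OF c2] P P synthesis(2)[OF c1] synthesis(2)[OF c2]])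
  then show "synthesis (c1 + c2) = synthesis c1 + synthesis c2"
    using synthesis(1)[OF c1] synthesis(1)[OF c2]
    by (intro synthesis_eqI subspace_add[OF T.subspace_YF c1 c2] subspace_add[OF X.subspace_YF])
      (simp_all add: scaleR_add_left sum.distrib)
next
  have P: "(\<Sum>i<k. c i *\<^sub>R f i) \<in> X 0" for c k
    by (rule X.YF_D[OF synthesis_sum_XF])
  fix a :: real and c assume c: "c \<in> TF"
  have "(\<lambda>k. ns 0 (a *\<^sub>R (\<Sum>i<k. c i *\<^sub>R f i) - a *\<^sub>R synthesis c)) \<longlonglongrightarrow> 0"
    using synthesis(1)[OF c] by (intro normed_on_tendsto_scale[OF X.normed _ P synthesis(2)[OF c]]) blast
  then show "synthesis (a *\<^sub>R c) = a *\<^sub>R synthesis c"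
    using synthesis(1)[OF c]
    by (intro synthesis_eqI subspace_scale[OF T.subspace_YF c] subspace_scale[OF X.subspace_YF])
      (simp_all add: scaleR_sum_right scaleR_fun_def)
qed

lemma synthesis_bound:
  obtains K where "K \<ge> 0" and "\<And>c. c \<in> TF \<Longrightarrow> ns s (synthesis c) \<le> K * tn s c"
proof -
  obtain B where B: "B \<ge> 0"
    and bound: "\<And>I c. ns s (\<Sum>i\<in>I. c i *\<^sub>R f i) \<le> B * tn s (\<Sum>i\<in>I. c i *\<^sub>R unitvec i)"
    using synthesis_sum_bound by blast
  have "ns s (synthesis c) \<le> B * tn s c" if c: "c \<in> TF" for c
  proof (rule tendsto_le[OF _ _ _ always_eventually])
    have P: "(\<Sum>i<k. c i *\<^sub>R f i) \<in> X s" for k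
      by (rule X.YF_D[OF synthesis_sum_XF])
    have E: "(\<Sum>i<k. c i *\<^sub>R unitvec i) \<in> T s" for k by (rule T.YF_D[OF expansion_TF])
    show "(\<lambda>k. ns s (\<Sum>i<k. c i *\<^sub>R f i)) \<longlonglongrightarrow> ns s (synthesis c)"
      using synthesis[OF c] P by (intro normed_on_tendsto_norm[OF X.normed]) blast+
    have "(\<lambda>k. tn s ((\<Sum>i<k. c i *\<^sub>R unitvec i) - c)) \<longlonglongrightarrow> 0"
      using expansion_tendsto[OF c, of s] normed_on_commute[OF T.normed _ E, of c] c by simp
    then show "(\<lambda>k. B * tn s (\<Sum>i<k. c i *\<^sub>R unitvec i)) \<longlonglongrightarrow> B * tn s c"
      using c E by (intro tendsto_mult_left normed_on_tendsto_norm[OF T.normed]) blast+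
  qed (simp_all add: bound)
  then show ?thesis using that B by blast
qed

lemma synthesis_analysis:
  assumes x: "x \<in> XF"
  shows "synthesis (\<lambda>i. g i x) = x"
proof (rule synthesis_eqI[OF analysis_TF[OF x] x])
  have "(\<lambda>k. ns 0 (x - (\<Sum>i<k. g i x *\<^sub>R f i))) \<longlonglongrightarrow> 0"
    using reconstructs x unfolding F_reconstructs_def by blast
  moreover have "ns 0 (x - (\<Sum>i<k. g i x *\<^sub>R f i)) = ns 0 ((\<Sum>i<k. g i x *\<^sub>R f i) - x)" for k
    using f_XF x
    by (intro normed_on_commute[OF X.normed] subspace_sum[OF X.subspace] subspace_scale[OF X.subspace]) blast+
  ultimately show "(\<lambda>k. ns 0 ((\<Sum>i<k. g i x *\<^sub>R f i) - x)) \<longlonglongrightarrow> 0" by simp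
qed

theorem analysis_F_frame: "F_frame X ns T tn g"
  unfolding F_frame_def pre_F_frame_def
proof (intro conjI exI[of _ synthesis] allI ballI)
  show "F_bessel X ns T tn g" using bessel .
  show "lin_on TF synthesis" using lin_on_synthesis .
  show "synthesis c \<in> XF" if "c \<in> TF" for c using synthesis(1)[OF that] .
  show "synthesis (\<lambda>i. g i x) = x" if "x \<in> XF" for x using synthesis_analysis[OF that] .
  fix s
  obtain K where K: "K \<ge> 0" "\<And>c. c \<in> TF \<Longrightarrow> ns s (synthesis c) \<le> K * tn s c"
    using synthesis_bound by blast
  then show "\<exists>K. \<forall>c\<in>TF. ns s (synthesis c) \<le> K * tn s c" by blast
  \<comment> \<open>the lower frame bound is the boundedness of the synthesis operator\<close>
  show "\<exists>A>0. \<forall>x\<in>XF. A * ns s x \<le> tn s (\<lambda>i. g i x)"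
  proof (intro exI[of _ "1 / (K + 1)"] conjI ballI)
    fix x assume x: "x \<in> XF"
    have "ns s x \<le> K * tn s (\<lambda>i. g i x)" using K(2)[OF analysis_TF[OF x]] synthesis_analysis[OF x] by simp
    also have "\<dots> \<le> (K + 1) * tn s (\<lambda>i. g i x)"
      using normed_on_nonneg[OF T.normed] analysis_TF[OF x] by (simp add: distrib_right)
    finally show "1 / (K + 1) * ns s x \<le> tn s (\<lambda>i. g i x)" using K(1) by (simp add: field_simps)
  qed (use K(1) in simp)
qed

lemma dual_analysis:
  assumes h: "h \<in> dual_on (X s) (ns s)" and x: "x \<in> XF"
  shows "h x = seqdual_functional (T s) (tn s) (\<lambda>i. h (f i)) (\<lambda>i. g i x)"
proof -
  let ?G = "seqdual_functional (T s) (tn s) (\<lambda>i. h (f i))"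
  let ?c = "\<lambda>i. g i x"
  have G: "?G \<in> dual_on (T s) (tn s)" using seqdual_functional(1)[OF coeff_seqdual[OF h]] .
  have P: "(\<Sum>i<k. ?c i *\<^sub>R f i) \<in> X s" for k
    by (rule X.YF_D[OF synthesis_sum_XF])
  have E: "(\<Sum>i<k. ?c i *\<^sub>R unitvec i) \<in> T s" for k
    by (rule T.YF_D[OF expansion_TF])
  have xs: "x \<in> X s" using x by blast
  have cs: "?c \<in> T s" by (rule T.YF_D[OF analysis_TF[OF x]])
  have "(\<lambda>k. ns s (x - (\<Sum>i<k. ?c i *\<^sub>R f i))) \<longlonglongrightarrow> 0"
    using reconstructs x unfolding F_reconstructs_def by blast
  then have "(\<lambda>k. ns s ((\<Sum>i<k. ?c i *\<^sub>R f i) - x)) \<longlonglongrightarrow> 0"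
    using normed_on_commute[OF X.normed xs P] by simp
  then have "(\<lambda>k. h (\<Sum>i<k. ?c i *\<^sub>R f i)) \<longlonglongrightarrow> h x"
    by (rule dual_on_tendsto[OF h X.normed xs P])
  moreover have "h (\<Sum>i<k. ?c i *\<^sub>R f i) = ?G (\<Sum>i<k. ?c i *\<^sub>R unitvec i)" for k
    by (rule dual_synthesis[OF h])
  ultimately have "(\<lambda>k. ?G (\<Sum>i<k. ?c i *\<^sub>R unitvec i)) \<longlonglongrightarrow> h x" by simp
  moreover have "(\<lambda>k. tn s ((\<Sum>i<k. ?c i *\<^sub>R unitvec i) - ?c)) \<longlonglongrightarrow> 0"
    using expansion_tendsto[OF analysis_TF[OF x], of s] normed_on_commute[OF T.normed cs E] by simp
  then have "(\<lambda>k. ?G (\<Sum>i<k. ?c i *\<^sub>R unitvec i)) \<longlonglongrightarrow> ?G ?c"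
    by (rule dual_on_tendsto[OF G T.normed cs E])
  ultimately show ?thesis by (rule LIMSEQ_unique)
qed

lemma dual_reconstruction_coeff:
  assumes h: "h \<in> dual_on (X s) (ns s)"
  shows "dual_reconstruction s (\<lambda>i. h (f i)) = h"
  using dual_reconstruction_unique[OF coeff_seqdual[OF h] h dual_analysis[OF h]] .

theorem coeff_banach_frame_cond:
  "banach_frame_cond (dual_on (X s) (ns s)) (opnorm (X s) (ns s)) (seqdual (T s) (tn s))
     (seqdual_norm (T s) (tn s)) (\<lambda>h i. h (f i))"
  unfolding banach_frame_cond_def frame_cond_def
proof (intro conjI exI[of _ "dual_reconstruction s"] ballI)
  show "bessel_cond (dual_on (X s) (ns s)) (opnorm (X s) (ns s)) (seqdual (T s) (tn s))
      (seqdual_norm (T s) (tn s)) (\<lambda>h i. h (f i))"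
    by (rule coeff_bessel)
  obtain B where B: "B > 0" "\<And>x. x \<in> XF \<Longrightarrow> tn s (\<lambda>i. g i x) \<le> B * ns s x"
    using analysis_bound by blast
  have opnorm_le: "opnorm (X s) (ns s) (dual_reconstruction s d) \<le> B * seqdual_norm (T s) (tn s) d"
    if "d \<in> seqdual (T s) (tn s)" for d
    using opnorm_dual_reconstruction[OF that] B by simp
  \<comment> \<open>the lower frame bound is the boundedness of the reconstruction operator\<close>
  show "\<exists>A>0. \<forall>h\<in>dual_on (X s) (ns s).
      A * opnorm (X s) (ns s) h \<le> seqdual_norm (T s) (tn s) (\<lambda>i. h (f i))"
  proof (intro exI[of _ "1 / B"] conjI ballI)
    fix h assume h: "h \<in> dual_on (X s) (ns s)"
    show "1 / B * opnorm (X s) (ns s) h \<le> seqdual_norm (T s) (tn s) (\<lambda>i. h (f i))"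
      using opnorm_le[OF coeff_seqdual[OF h]] dual_reconstruction_coeff[OF h] B(1)
      by (simp add: field_simps)
  qed (use B(1) in simp)
  show "lin_on (seqdual (T s) (tn s)) (dual_reconstruction s)" by (rule lin_on_dual_reconstruction)
  show "dual_reconstruction s d \<in> dual_on (X s) (ns s)" if "d \<in> seqdual (T s) (tn s)" for d
    using dual_reconstruction(1)[OF that] .
  show "\<exists>K. \<forall>d\<in>seqdual (T s) (tn s).
      opnorm (X s) (ns s) (dual_reconstruction s d) \<le> K * seqdual_norm (T s) (tn s) d"
    using opnorm_le by blast
  show "dual_reconstruction s (\<lambda>i. h (f i)) = h" if "h \<in> dual_on (X s) (ns s)" for h
    using dual_reconstruction_coeff[OF that] .
qed

end

theorem theorem3p6:
  fixes X :: "nat \<Rightarrow> 'a::real_vector set" and ns :: "nat \<Rightarrow> 'a \<Rightarrow> real"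
    and T :: "nat \<Rightarrow> (nat \<Rightarrow> real) set" and tn :: "nat \<Rightarrow> (nat \<Rightarrow> real) \<Rightarrow> real"
    and g :: "nat \<Rightarrow> 'a \<Rightarrow> real"
  assumes "F_seq X ns"
    and "F_seq T tn"
    and "\<forall>s. cb_space (T s) (tn s)"
    and "F_bessel X ns T tn g"
  shows "((\<exists>f. DF_bessel X ns T tn f \<and> F_reconstructs X ns g f) \<longleftrightarrow> F_frame X ns T tn g)
    \<and> (\<forall>f. DF_bessel X ns T tn f \<and> F_reconstructs X ns g f \<longrightarrow>
          ((\<forall>s. cb_space (seqdual (T s) (tn s)) (seqdual_norm (T s) (tn s))) \<longrightarrow> pre_DF_frame X ns T tn f)
        \<and> ((\<forall>s. reflexive_on (T s) (tn s)) \<longrightarrow> DF_frame X ns T tn f))"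
proof -
  interpret F_bessel_setting X ns T tn g
    using assms by unfold_locales auto
  have consequences: "F_frame X ns T tn g \<and> pre_DF_frame X ns T tn f \<and> DF_frame X ns T tn f"
    if "DF_bessel X ns T tn f" "F_reconstructs X ns g f" for f
  proof -
    interpret F_bessel_pair X ns T tn g f by unfold_locales (fact that)+
    have "frame_cond (dual_on (X s) (ns s)) (opnorm (X s) (ns s)) (seqdual (T s) (tn s))
        (seqdual_norm (T s) (tn s)) (\<lambda>h i. h (f i))" for s
      using coeff_banach_frame_cond unfolding banach_frame_cond_def by blast
    then show ?thesis
      using analysis_F_frame f_XF coeff_banach_frame_cond unfolding pre_DF_frame_def DF_frame_def by blast
  qed
  then show ?thesis using F_frame_imp_DF_bessel by blast
qed

end
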